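(* Consider the following optimal control problem. Let $T>0$, let $U\subseteq\mathbb{R}^k$ be compact with $0\in U$, let $f:[0,T]\times\mathbb{R}^n\times U\to\mathbb{R}^n$ be continuous and continuously differentiable in its second and third arguments, let $x_0\in\mathbb{R}^n$, let $\mathcal U$ be the set of measurable functions $u:[0,T]\to U$, let $\phi:[0,T]\times\mathbb{R}^n\times U\to\mathbb{R}$ be differentiable in its second argument, and let $\psi:\mathbb{R}^n\to\mathbb{R}$ be differentiable. The cost of $u\in\mathcal U$ is $J[u]=\int_0^T\phi(t,x_u(t),u(t))\,dt+\psi(x_u(T))$, where $x_u$ solves $\dot x(t)=f(t,x(t),u(t))$, $x(0)=x_0$. Assume the problem is nonsingular, and for $u\in\mathcal U$ let $\lambda_u$ be the costate solving $\dot\lambda(t)=-D_xf(t,x_u(t),u(t))^\top\lambda(t)-\phi_x(t,x_u(t),u(t))$, $\lambda(T)=\psi_x(x_u(T))$. Let $H(t,x,\lambda,u)=\lambda^\top f(t,x,u)+\phi(t,x,u)$, and let $\mathrm{MSA}:\mathcal U\to\mathcal U$ be the operator with $\mathrm{MSA}(u)(t)\in\arg\min_{\tilde u\in U}H(t,x_u(t),\lambda_u(t),\tilde u)$ for all $t\in[0,T]$ (ties broken by a fixed rule). Let $X,\Lambda\subset\mathbb{R}^n$ be bounded sets such that $x_u(t)\in X$ and $\lambda_u(t)\in\Lambda$ for all $u\in\mathcal U$ and $t\in[0,T]$. Fix a norm $\|\cdot\|$ on $\mathbb{R}^n$ with dual norm $\|\cdot\|_\star$, and a norm $\|\cdot\|_U$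 on $\mathbb{R}^k$. Assume: (A1) there is $c>0$ such that for all $t\in[0,T]$ and $\tilde u\in U$, the map $x\mapsto f(t,x,\tilde u)$ has one-sided Lipschitz constant at most $-c$ with respect to $\|\cdot\|$; moreover the solution of $\dot x=f(t,x,0)$, $x(0)=x_0$, is bounded on $[0,T]$; (A2) for all $t\in[0,T]$ and $\tilde x\in\mathbb{R}^n$, the map $u\mapsto f(t,\tilde x,u)$ is Lipschitz from $(U,\|\cdot\|_U)$ to $(\mathbb{R}^n,\|\cdot\|)$ with constant $\ell_{f,u}$; (A3) for all $t\in[0,T]$, $\tilde x\in X$, $\tilde u\in U$, $\tilde\lambda\in\Lambda$: the map $x\mapsto D_xf(t,x,\tilde u)^\top\tilde\lambda$ is Lipschitz from $(\mathbb{R}^n,\|\cdot\|)$ to $(\mathbb{R}^n,\|\cdot\|_\star)$ with constant $\ell_{f_x,x}$, and the map $u\mapsto D_xf(t,\tilde x,u)^\top\tilde\lambda$ is Lipschitz from $(U,\|\cdot\|_U)$ to $(\mathbb{R}^n,\|\cdot\|_\star)$ with constant $\ell_{f_x,u}$; (A4) for all $t\in[0,T]$, $\tilde x\in X$, $\tilde u\in U$: $x\mapsto\phi_x(t,x,\tilde u)$ is Lipschitz from $(\mathbb{R}^n,\|\cdot\|)$ to $(\mathbb{R}^n,\|\cdot\|_\star)$ with constant $\ell_{\phi_x,x}$; $u\mapsto\phi_x(t,\tilde x,u)$ is Lipschitz from $(U,\|\cdot\|_U)$ to $(\mathbb{R}^n,\|\cdot\|_\star)$ with constant $\ell_{\phi_x,u}$;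 and $x\mapsto\psi_x(x)$ is Lipschitz from $(\mathbb{R}^n,\|\cdot\|)$ to $(\mathbb{R}^n,\|\cdot\|_\star)$ with constant $\ell_{\psi_x,x}$; (A5) there is a map $h:[0,T]\times X\times\Lambda\to U$ with $h(t,x,\lambda)\in\arg\min_{u\in U}H(t,x,\lambda,u)$ for all $(t,x,\lambda)$, with ties broken identically to the MSA operator (so $\mathrm{MSA}(u)(t)=h(t,x_u(t),\lambda_u(t))$), such that for all fixed $t$, $\tilde x\in X$, $\tilde\lambda\in\Lambda$, the map $x\mapsto h(t,x,\tilde\lambda)$ is Lipschitz from $(\mathbb{R}^n,\|\cdot\|)$ to $(\mathbb{R}^k,\|\cdot\|_U)$ with constant $\ell_{h,x}$, and $\lambda\mapsto h(t,\tilde x,\lambda)$ is Lipschitz from $(\mathbb{R}^n,\|\cdot\|_\star)$ to $(\mathbb{R}^k,\|\cdot\|_U)$ with constant $\ell_{h,\lambda}$. Equip $\mathcal U$ with the norm $\|u\|_{\mathcal U}=\sup_{t\in[0,T]}\|u(t)\|_U$, and set $\kappa=c^{-1}(1-e^{-cT})$, $b_1=\ell_{h,x}\ell_{f,u}+\ell_{h,\lambda}(\ell_{\psi_x,x}\ell_{f,u}+\ell_{\phi_x,u}+\ell_{f_x,u})$, $b_2=\ell_{h,\lambda}\ell_{f,u}(\ell_{\phi_x,x}+\ell_{f_x,x})$. Then: (i) the Lipschitz constant of $\mathrm{MSA}$ with respect to $\|\cdot\|_{\mathcal U}$ satisfies ${\rm Lip}(\mathrm{MSA})\le b_1\kappa+b_2\kappa^2$;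 (ii) if $b_1\kappa+b_2\kappa^2<1$, then $\mathrm{MSA}$ is a contraction, it has a unique fixed point $\hat u\in\mathcal U$, the iterates $u^{(i)}=\mathrm{MSA}^i(u^{(0)})$ converge to $\hat u$ from any $u^{(0)}\in\mathcal U$, and for all $t\in[0,T]$ and all $i$, $\|u^{(i)}(t)-\hat u(t)\|_U\le\frac{(b_1\kappa+b_2\kappa^2)^i}{1-b_1\kappa-b_2\kappa^2}\|u^{(1)}-u^{(0)}\|_{\mathcal U}$.
   Context: The dual norm is $\|z\|_\star=\sup_{\|y\|\le1}y^\top z$. For a matrix $A$, the induced norm is $\|A\|=\sup_{\|x\|=1}\|Ax\|$ and the logarithmic norm is $\mu(A)=\lim_{h\to0^+}(\|I_n+hA\|-1)/h$. For a continuously differentiable $F:\mathbb{R}^n\to\mathbb{R}^n$, its one-sided Lipschitz constant with respect to $\|\cdot\|$ is $\sup_{x\in\mathbb{R}^n}\mu(DF(x))$. A map between normed spaces is Lipschitz with constant $\ell$ if $\|T(x)-T(\bar x)\|\le\ell\|x-\bar x\|$ for all $x,\bar x$. "Nonsingular" means that the multiplier of the running cost in Pontryagin's minimum principle is normalized to $1$, i.e. the Hamiltonian and costate are as given above. State and costate solutions are assumed to exist on $[0,T]$. *)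

theory Defs
  imports "HOL-Analysis.Analysis"
begin

definition is_norm :: "('a::real_vector \<Rightarrow> real) \<Rightarrow> bool" where
  "is_norm N \<longleftrightarrow> (\<forall>x. N x = 0 \<longleftrightarrow> x = 0) \<and> (\<forall>x y. N (x + y) \<le> N x + N y)
     \<and> (\<forall>a x. N (a *\<^sub>R x) = \<bar>a\<bar> * N x)"

definition dual_norm :: "('a::real_inner \<Rightarrow> real) \<Rightarrow> 'a \<Rightarrow> real" where
  "dual_norm N z = Sup {y \<bullet> z | y. N y \<le> 1}"

definition induced_norm :: "(real^'n \<Rightarrow> real) \<Rightarrow> real^'n^'n \<Rightarrow> real" where
  "induced_norm N A = Sup {N (A *v x) | x. N x = 1}"

definition log_norm :: "(real^'n \<Rightarrow> real) \<Rightarrow> real^'n^'n \<Rightarrow> real" where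
  "log_norm N A = Lim (at_right 0) (\<lambda>h. (induced_norm N (mat 1 + h *\<^sub>R A) - 1) / h)"

definition lip_with :: "('a::ab_group_add \<Rightarrow> real) \<Rightarrow> ('b::ab_group_add \<Rightarrow> real) \<Rightarrow> 'a set
    \<Rightarrow> ('a \<Rightarrow> 'b) \<Rightarrow> real \<Rightarrow> bool" where
  "lip_with Nd Nc S F L \<longleftrightarrow> (\<forall>x\<in>S. \<forall>y\<in>S. Nc (F x - F y) \<le> L * Nd (x - y))"

text \<open>Admissible controls: measurable maps [0,T] -> U (extended by 0 outside [0,T],
  so that controls are identified with their restriction to [0,T]).\<close>
definition controls :: "real \<Rightarrow> (real^'k) set \<Rightarrow> (real \<Rightarrow> real^'k) set" where
  "controls T U = {u. u \<in> borel_measurable lborel \<and> (\<forall>t\<in>{0..T}. u t \<in> U)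
                      \<and> (\<forall>t. t \<notin> {0..T} \<longrightarrow> u t = 0)}"

definition ctrl_dist :: "real \<Rightarrow> (real^'k \<Rightarrow> real) \<Rightarrow> (real \<Rightarrow> real^'k) \<Rightarrow> (real \<Rightarrow> real^'k) \<Rightarrow> real" where
  "ctrl_dist T NU u v = Sup ((\<lambda>t. NU (u t - v t)) ` {0..T})"

definition hamiltonian :: "(real \<Rightarrow> real^'n \<Rightarrow> real^'k \<Rightarrow> real^'n) \<Rightarrow> (real \<Rightarrow> real^'n \<Rightarrow> real^'k \<Rightarrow> real)
   \<Rightarrow> real \<Rightarrow> real^'n \<Rightarrow> real^'n \<Rightarrow> real^'k \<Rightarrow> real" where
  "hamiltonian f \<phi> t x l v = l \<bullet> f t x v + \<phi> t x v"

end

(*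
  For two controls u and v the state difference x_u - x_v solves an integral equation whose
  right-hand side grows in the norm N at most like -c N (x_u - x_v) + l_fu |u - v|: the first
  term comes from the logarithmic-norm bound (A1) on D_x f, through a piecewise linearization
  along the segment from x_v to x_u, the second from (A2).  A Gronwall argument then gives
  N (x_u - x_v) <= l_fu kappa |u - v|.  The costate difference solves a backward linear
  equation driven by the transpose of D_x f, whose growth in the dual norm is controlled by the
  same logarithmic norm, plus forcing terms bounded through (A3), (A4) and the state estimate;
  running the Gronwall argument backwards from lambda (T) = psi_x (x (T)) bounds it as well.
  Composing with the Lipschitz feedback h of (A5) gives Lip (MSA) <= b1 kappa + b2 kappa^2, and
  part (ii) is the Banach fixed point argument for the sup distance on controls.
  As the controls are merely measurable, the Gronwall inequality is derived from the integral
  equations with Henstock-Kurzweil gauges rather than from pointwise derivatives.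
*)

theory Submission
  imports Defs
begin

lemma is_normD:
  assumes "is_norm N"
  shows "N (x + y) \<le> N x + N y" "N (a *\<^sub>R x) = \<bar>a\<bar> * N x" "N x = 0 \<longleftrightarrow> x = 0"
  using assms unfolding is_norm_def by auto

lemma is_norm_zero: "is_norm N \<Longrightarrow> N 0 = 0"
  using is_normD(3) by blast

lemma is_norm_minus: "is_norm N \<Longrightarrow> N (- x) = N x"
  using is_normD(2)[of N "-1" x] by simp

lemma is_norm_commute: "is_norm N \<Longrightarrow> N (x - y) = N (y - x)"
  using is_norm_minus[of N "x - y"] by simp

lemma is_norm_nonneg: "is_norm N \<Longrightarrow> N x \<ge> 0"
  using is_normD(1)[of N x "- x"] is_norm_zero[of N] is_norm_minus[of N x] by simp

lemma is_norm_pos: "is_norm N \<Longrightarrow> x \<noteq> 0 \<Longrightarrow> N x > 0"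
  using is_normD(3)[of N x] is_norm_nonneg[of N x] by simp

lemma is_norm_normalize: "is_norm N \<Longrightarrow> x \<noteq> 0 \<Longrightarrow> N ((1 / N x) *\<^sub>R x) = 1"
  using is_normD(2)[of N "1 / N x" x] is_norm_pos[of N x] by simp

lemma is_norm_triangle_diff: "is_norm N \<Longrightarrow> N (x - y) \<le> N x + N y"
  using is_normD(1)[of N x "- y"] is_norm_minus[of N y] by simp

lemma is_norm_triangle_rev: "is_norm N \<Longrightarrow> \<bar>N x - N y\<bar> \<le> N (x - y)"
  using is_normD(1)[of N "x - y" y] is_normD(1)[of N "y - x" x] is_norm_commute[of N x y]
  by (simp add: abs_le_iff)

lemma is_norm_sum: "is_norm N \<Longrightarrow> N (sum f S) \<le> (\<Sum>i\<in>S. N (f i))"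
proof (induction S rule: infinite_finite_induct)
  case (insert x F)
  then show ?case using is_normD(1)[OF insert(4), of "f x" "sum f F"] by simp
qed (simp_all add: is_norm_zero)

lemma is_norm_le_const_norm:
  fixes N :: "'a::euclidean_space \<Rightarrow> real"
  assumes N: "is_norm N"
  obtains C where "C > 0" "\<And>x. N x \<le> C * norm x"
proof
  define C where "C = (\<Sum>b\<in>Basis. N b) + 1"
  have "(\<Sum>b\<in>Basis. N b) \<ge> 0" by (intro sum_nonneg is_norm_nonneg[OF N])
  then show "C > 0" unfolding C_def by simp
  fix x :: 'a
  have "N x = N (\<Sum>b\<in>Basis. (x \<bullet> b) *\<^sub>R b)" by (simp add: euclidean_representation)
  also have "\<dots> \<le> (\<Sum>b\<in>Basis. N ((x \<bullet> b) *\<^sub>R b))" by (rule is_norm_sum[OF N])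
  also have "\<dots> = (\<Sum>b\<in>Basis. \<bar>x \<bullet> b\<bar> * N b)" by (simp add: is_normD(2)[OF N])
  also have "\<dots> \<le> (\<Sum>b\<in>Basis. norm x * N b)"
    by (intro sum_mono mult_right_mono is_norm_nonneg[OF N]) (simp add: Basis_le_norm)
  also have "\<dots> \<le> C * norm x" unfolding C_def by (simp add: sum_distrib_left algebra_simps)
  finally show "N x \<le> C * norm x" .
qed

lemma is_norm_continuous_on:
  fixes N :: "'a::euclidean_space \<Rightarrow> real"
  assumes N: "is_norm N"
  shows "continuous_on S N"
proof -
  obtain C where C: "C > 0" "\<And>x. N x \<le> C * norm x" using is_norm_le_const_norm[OF N] by blast
  have "dist (N x) (N y) \<le> C * dist x y" for x y
    using is_norm_triangle_rev[OF N, of x y] C(2)[of "x - y"] by (simp add: dist_norm dist_real_def)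
  then have "lipschitz_on C S N" unfolding lipschitz_on_def using C(1) by auto
  then show ?thesis by (rule lipschitz_on_continuous_on)
qed

text \<open>The constant comes from the minimum of \<open>N\<close> on the Euclidean unit sphere.\<close>

lemma norm_le_const_is_norm:
  fixes N :: "'a::euclidean_space \<Rightarrow> real"
  assumes N: "is_norm N"
  obtains C where "C > 0" "\<And>x. norm x \<le> C * N x"
proof -
  obtain b :: 'a where "b \<in> Basis" using nonempty_Basis by blast
  then have "sphere (0::'a) 1 \<noteq> {}" by (auto intro!: exI[of _ b])
  then obtain x0 where x0: "x0 \<in> sphere 0 1" "\<And>y. y \<in> sphere 0 1 \<Longrightarrow> N x0 \<le> N y"
    using continuous_attains_inf[OF compact_sphere _ is_norm_continuous_on[OF N]] by blast
  have m: "N x0 > 0" using x0(1) by (intro is_norm_pos[OF N]) auto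
  have "norm x \<le> (1 / N x0) * N x" for x
  proof (cases "x = 0")
    case False
    have "N x0 \<le> N ((1 / norm x) *\<^sub>R x)" using x0(2) False by simp
    also have "\<dots> = N x / norm x" using is_normD(2)[OF N] by simp
    finally show ?thesis using m False by (simp add: field_simps)
  qed (simp add: is_norm_zero[OF N])
  then show ?thesis using that[of "1 / N x0"] m by auto
qed

lemma is_norm_exists_unit:
  fixes N :: "'a::euclidean_space \<Rightarrow> real"
  assumes N: "is_norm N"
  obtains x where "N x = 1"
proof -
  obtain b :: 'a where "b \<in> Basis" using nonempty_Basis by blast
  then have "b \<noteq> 0" by auto
  then show ?thesis using that is_norm_normalize[OF N] by blast
qed

lemma dual_norm_bdd_above:
  fixes N :: "'a::euclidean_space \<Rightarrow> real"
  assumes N: "is_norm N"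
  shows "bdd_above {y \<bullet> z | y. N y \<le> 1}"
proof -
  obtain C where C: "C > 0" "\<And>x. norm x \<le> C * N x" using norm_le_const_is_norm[OF N] by blast
  have "y \<bullet> z \<le> C * norm z" if "N y \<le> 1" for y
  proof -
    have "y \<bullet> z \<le> norm y * norm z" by (rule norm_cauchy_schwarz)
    also have "\<dots> \<le> C * norm z"
      using C(2)[of y] that C(1) by (intro mult_right_mono) (auto intro: order_trans)
    finally show ?thesis .
  qed
  then show ?thesis unfolding bdd_above_def by blast
qed

lemma inner_le_dual_norm:
  fixes N :: "'a::euclidean_space \<Rightarrow> real"
  assumes "is_norm N" and "N y \<le> 1"
  shows "y \<bullet> z \<le> dual_norm N z"
  unfolding dual_norm_def using assms by (intro cSup_upper dual_norm_bdd_above) auto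

lemma dual_norm_leI:
  fixes N :: "'a::euclidean_space \<Rightarrow> real"
  assumes N: "is_norm N" and "\<And>y. N y \<le> 1 \<Longrightarrow> y \<bullet> z \<le> B"
  shows "dual_norm N z \<le> B"
  unfolding dual_norm_def
  using assms is_norm_zero[OF N] by (intro cSup_least) (auto intro!: exI[of _ 0])

lemma inner_le_norm_mult_dual_norm:
  fixes N :: "'a::euclidean_space \<Rightarrow> real"
  assumes N: "is_norm N"
  shows "y \<bullet> z \<le> N y * dual_norm N z"
proof (cases "y = 0")
  case False
  then have "((1 / N y) *\<^sub>R y) \<bullet> z \<le> dual_norm N z"
    using is_norm_normalize[OF N] by (intro inner_le_dual_norm[OF N]) auto
  then show ?thesis using is_norm_pos[OF N False] by (simp add: field_simps)
qed (use inner_le_dual_norm[OF N, of 0 z] is_norm_zero[OF N] in simp)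

lemma dual_norm_triangle:
  fixes N :: "'a::euclidean_space \<Rightarrow> real"
  assumes N: "is_norm N"
  shows "dual_norm N (z + w) \<le> dual_norm N z + dual_norm N w"
proof (rule dual_norm_leI[OF N])
  fix y assume "N y \<le> 1"
  then show "y \<bullet> (z + w) \<le> dual_norm N z + dual_norm N w"
    using inner_le_dual_norm[OF N] by (simp add: inner_add_right add_mono)
qed

lemma dual_norm_scaleR_le:
  fixes N :: "'a::euclidean_space \<Rightarrow> real"
  assumes N: "is_norm N"
  shows "dual_norm N (a *\<^sub>R z) \<le> \<bar>a\<bar> * dual_norm N z"
proof (rule dual_norm_leI[OF N])
  fix y assume y: "N y \<le> 1"
  then have "N (sgn a *\<^sub>R y) \<le> 1"
    using is_normD(2)[OF N] by (simp add: abs_sgn mult_le_one sgn_if)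
  then have "\<bar>a\<bar> * ((sgn a *\<^sub>R y) \<bullet> z) \<le> \<bar>a\<bar> * dual_norm N z"
    by (intro mult_left_mono inner_le_dual_norm[OF N]) auto
  moreover have "y \<bullet> (a *\<^sub>R z) = \<bar>a\<bar> * ((sgn a *\<^sub>R y) \<bullet> z)"
    by (simp only: inner_scaleR_left inner_scaleR_right mult.assoc[symmetric] abs_mult_sgn)
  ultimately show "y \<bullet> (a *\<^sub>R z) \<le> \<bar>a\<bar> * dual_norm N z" by linarith
qed

lemma dual_norm_scaleR:
  fixes N :: "'a::euclidean_space \<Rightarrow> real"
  assumes N: "is_norm N"
  shows "dual_norm N (a *\<^sub>R z) = \<bar>a\<bar> * dual_norm N z"
proof (cases "a = 0")
  case True
  have "dual_norm N 0 \<le> 0" by (rule dual_norm_leI[OF N]) simp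
  moreover have "0 \<le> dual_norm N 0" using inner_le_dual_norm[OF N, of 0 0] is_norm_zero[OF N] by simp
  ultimately show ?thesis using True by simp
next
  case False
  have "dual_norm N z \<le> \<bar>1 / a\<bar> * dual_norm N (a *\<^sub>R z)"
    using dual_norm_scaleR_le[OF N, of "1 / a" "a *\<^sub>R z"] False by simp
  then have "\<bar>a\<bar> * dual_norm N z \<le> dual_norm N (a *\<^sub>R z)"
    using False by (simp add: field_simps abs_divide)
  then show ?thesis using dual_norm_scaleR_le[OF N, of a z] by linarith
qed

lemma is_norm_dual_norm:
  fixes N :: "'a::euclidean_space \<Rightarrow> real"
  assumes N: "is_norm N"
  shows "is_norm (dual_norm N)"
  unfolding is_norm_def
proof (intro conjI allI)
  fix z :: 'a
  show "dual_norm N z = 0 \<longleftrightarrow> z = 0"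
  proof
    assume z: "dual_norm N z = 0"
    show "z = 0"
    proof (rule ccontr)
      assume "z \<noteq> 0"
      then have "((1 / N z) *\<^sub>R z) \<bullet> z \<le> dual_norm N z"
        using is_norm_normalize[OF N] by (intro inner_le_dual_norm[OF N]) auto
      moreover have "((1 / N z) *\<^sub>R z) \<bullet> z > 0"
        using \<open>z \<noteq> 0\<close> is_norm_pos[OF N] by simp
      ultimately show False using z by simp
    qed
  qed (use dual_norm_scaleR[OF N, of 0] in simp)
qed (use dual_norm_triangle[OF N] dual_norm_scaleR[OF N] in auto)

context
  fixes N :: "real^'n \<Rightarrow> real"
  assumes N: "is_norm N"
begin

lemma induced_norm_bdd_above: "bdd_above {N (A *v x) | x. N x = 1}"
proof -
  obtain C where C: "C > 0" "\<And>x. N x \<le> C * norm x" using is_norm_le_const_norm[OF N] by blast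
  obtain C' where C': "C' > 0" "\<And>x. norm x \<le> C' * N x" using norm_le_const_is_norm[OF N] by blast
  have "N (A *v x) \<le> C * (onorm ((*v) A) * C')" if "N x = 1" for x
  proof -
    have "N (A *v x) \<le> C * norm (A *v x)" by (rule C(2))
    also have "\<dots> \<le> C * (onorm ((*v) A) * norm x)"
      using C(1) by (intro mult_left_mono onorm matrix_vector_mul_bounded_linear) auto
    also have "\<dots> \<le> C * (onorm ((*v) A) * C')"
      using C'(2)[of x] that C(1) onorm_pos_le[OF matrix_vector_mul_bounded_linear, of A]
      by (intro mult_left_mono) auto
    finally show ?thesis .
  qed
  then show ?thesis unfolding bdd_above_def by blast
qed

lemma induced_norm_ge: "N x = 1 \<Longrightarrow> N (A *v x) \<le> induced_norm N A"
  unfolding induced_norm_def by (intro cSup_upper induced_norm_bdd_above) auto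

lemma induced_norm_leI: "(\<And>x. N x = 1 \<Longrightarrow> N (A *v x) \<le> B) \<Longrightarrow> induced_norm N A \<le> B"
  unfolding induced_norm_def using is_norm_exists_unit[OF N] by (intro cSup_least) blast+

lemma induced_norm_nonneg: "induced_norm N A \<ge> 0"
proof -
  obtain x where "N x = 1" using is_norm_exists_unit[OF N] by blast
  then show ?thesis using induced_norm_ge[of x A] is_norm_nonneg[OF N, of "A *v x"] by linarith
qed

lemma induced_norm_bound: "N (A *v x) \<le> induced_norm N A * N x"
proof (cases "x = 0")
  case False
  have "N (A *v ((1 / N x) *\<^sub>R x)) \<le> induced_norm N A"
    using is_norm_normalize[OF N False] by (rule induced_norm_ge)
  then have "N (A *v x) / N x \<le> induced_norm N A"
    using is_normD(2)[OF N] is_norm_pos[OF N False] by (simp add: matrix_vector_mult_scaleR)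
  then show ?thesis using is_norm_pos[OF N False] by (simp add: field_simps)
qed (simp add: is_norm_zero[OF N])

lemma induced_norm_add: "induced_norm N (A + B) \<le> induced_norm N A + induced_norm N B"
proof (rule induced_norm_leI)
  fix x assume x: "N x = 1"
  have "N ((A + B) *v x) \<le> N (A *v x) + N (B *v x)"
    using is_normD(1)[OF N] by (simp add: matrix_vector_mult_add_rdistrib)
  then show "N ((A + B) *v x) \<le> induced_norm N A + induced_norm N B"
    using induced_norm_ge[OF x, of A] induced_norm_ge[OF x, of B] by linarith
qed

lemma induced_norm_scaleR: "induced_norm N (r *\<^sub>R A) \<le> \<bar>r\<bar> * induced_norm N A"
proof (rule induced_norm_leI)
  fix x assume x: "N x = 1"
  have "N ((r *\<^sub>R A) *v x) = \<bar>r\<bar> * N (A *v x)"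
    using is_normD(2)[OF N] by (simp add: scaleR_matrix_vector_assoc[symmetric])
  then show "N ((r *\<^sub>R A) *v x) \<le> \<bar>r\<bar> * induced_norm N A"
    using induced_norm_ge[OF x, of A] by (simp add: mult_left_mono)
qed

lemma induced_norm_mat_1: "induced_norm N (mat 1) = 1"
proof (rule order_antisym)
  show "induced_norm N (mat 1) \<le> 1" by (rule induced_norm_leI) simp
  obtain x where "N x = 1" using is_norm_exists_unit[OF N] by blast
  then show "1 \<le> induced_norm N (mat 1)" using induced_norm_ge[of x "mat 1"] by simp
qed

text \<open>By convexity of \<open>h \<mapsto> induced_norm N (mat 1 + h *\<^sub>R A)\<close>, the difference quotient
  defining the logarithmic norm is monotone in \<open>h\<close>; hence its limit exists and is an infimum.\<close>

lemma log_norm_quotient_mono: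
  assumes "0 < h1" "h1 \<le> h2"
  shows "(induced_norm N (mat 1 + h1 *\<^sub>R A) - 1) / h1 \<le> (induced_norm N (mat 1 + h2 *\<^sub>R A) - 1) / h2"
proof -
  define s where "s = h1 / h2"
  have s: "0 < s" "s \<le> 1" using assms unfolding s_def by auto
  have "mat 1 + h1 *\<^sub>R A = s *\<^sub>R (mat 1 + h2 *\<^sub>R A) + (1 - s) *\<^sub>R mat 1"
    using assms unfolding s_def by (simp add: algebra_simps)
  then have "induced_norm N (mat 1 + h1 *\<^sub>R A)
      \<le> induced_norm N (s *\<^sub>R (mat 1 + h2 *\<^sub>R A)) + induced_norm N ((1 - s) *\<^sub>R mat 1)"
    by (simp only: induced_norm_add)
  also have "\<dots> \<le> s * induced_norm N (mat 1 + h2 *\<^sub>R A) + (1 - s)"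
    using induced_norm_scaleR[of s] induced_norm_scaleR[of "1 - s" "mat 1"] induced_norm_mat_1 s
    by (intro add_mono) auto
  finally have "induced_norm N (mat 1 + h1 *\<^sub>R A) \<le> s * induced_norm N (mat 1 + h2 *\<^sub>R A) + (1 - s)" .
  then have "induced_norm N (mat 1 + h1 *\<^sub>R A) - 1 \<le> (h1 / h2) * (induced_norm N (mat 1 + h2 *\<^sub>R A) - 1)"
    unfolding s_def by (simp add: algebra_simps)
  then show ?thesis using assms by (simp add: field_simps)
qed

lemma log_norm_quotient_lower:
  assumes "0 < h"
  shows "- induced_norm N A \<le> (induced_norm N (mat 1 + h *\<^sub>R A) - 1) / h"
proof -
  obtain x where x: "N x = 1" using is_norm_exists_unit[OF N] by blast
  have "x = (mat 1 + h *\<^sub>R A) *v x - h *\<^sub>R (A *v x)"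
    by (simp add: matrix_vector_mult_add_rdistrib scaleR_matrix_vector_assoc)
  then have "N x \<le> N ((mat 1 + h *\<^sub>R A) *v x) + N (h *\<^sub>R (A *v x))"
    using is_norm_triangle_diff[OF N] by metis
  also have "\<dots> \<le> induced_norm N (mat 1 + h *\<^sub>R A) + h * induced_norm N A"
    using induced_norm_ge[OF x] is_normD(2)[OF N] assms by (simp add: add_mono mult_left_mono)
  finally show ?thesis using x assms by (simp add: field_simps)
qed

lemma tendsto_log_norm:
  "((\<lambda>h. (induced_norm N (mat 1 + h *\<^sub>R A) - 1) / h) \<longlongrightarrow> log_norm N A) (at_right 0)"
proof -
  define q where "q h = (induced_norm N (mat 1 + h *\<^sub>R A) - 1) / h" for h
  have bdd: "bdd_below (q ` {0<..})"
    unfolding bdd_below_def q_def using log_norm_quotient_lower by auto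
  have "(q \<longlongrightarrow> Inf (q ` {0<..})) (at_right 0)"
  proof (rule order_tendstoI)
    fix y assume y: "y < Inf (q ` {0<..})"
    show "\<forall>\<^sub>F h in at_right 0. y < q h"
      using eventually_at_right_less
    proof eventually_elim
      case (elim h)
      then have "Inf (q ` {0<..}) \<le> q h" using bdd by (intro cInf_lower) auto
      then show ?case using y by linarith
    qed
  next
    fix y assume "Inf (q ` {0<..}) < y"
    then obtain h0 where h0: "h0 > 0" "q h0 < y" using cInf_lessD[of "q ` {0<..}" y] by auto
    have "\<forall>\<^sub>F h in at_right 0. h \<in> {0<..<h0}" using h0(1) by (rule eventually_at_right_real)
    then show "\<forall>\<^sub>F h in at_right 0. q h < y"
    proof eventually_elim
      case (elim h)
      then have "q h \<le> q h0" unfolding q_def by (intro log_norm_quotient_mono) auto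
      then show ?case using h0(2) by linarith
    qed
  qed
  moreover from this have "log_norm N A = Inf (q ` {0<..})"
    unfolding log_norm_def q_def by (intro tendsto_Lim) simp_all
  ultimately show ?thesis unfolding q_def by simp
qed

lemma eventually_induced_norm_le:
  assumes "log_norm N A < m"
  shows "\<forall>\<^sub>F h in at_right 0. induced_norm N (mat 1 + h *\<^sub>R A) \<le> 1 + h * m"
  using order_tendstoD(2)[OF tendsto_log_norm assms] eventually_at_right_less
  by eventually_elim (simp add: field_simps)

end

lemma inner_vector_matrix: "(y::real^'n) \<bullet> (z v* A) = z \<bullet> (A *v y)"
  by (metis dot_lmul_matrix inner_commute)

lemma dual_norm_transpose_le:
  fixes N :: "real^'n \<Rightarrow> real"
  assumes N: "is_norm N"
  shows "dual_norm N (transpose A *v z) \<le> induced_norm N A * dual_norm N z"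
proof (rule dual_norm_leI[OF N])
  fix y assume y: "N y \<le> 1"
  have "y \<bullet> (transpose A *v z) = (A *v y) \<bullet> z"
    by (simp add: inner_vector_matrix inner_commute)
  also have "\<dots> \<le> N (A *v y) * dual_norm N z" by (rule inner_le_norm_mult_dual_norm[OF N])
  also have "\<dots> \<le> (induced_norm N A * N y) * dual_norm N z"
    by (intro mult_right_mono induced_norm_bound[OF N] is_norm_nonneg[OF is_norm_dual_norm[OF N]])
  also have "\<dots> \<le> induced_norm N A * dual_norm N z"
    using y induced_norm_nonneg[OF N, of A] is_norm_nonneg[OF is_norm_dual_norm[OF N], of z]
      is_norm_nonneg[OF N, of y]
    by (intro mult_right_mono) (auto simp: mult_left_le)
  finally show "y \<bullet> (transpose A *v z) \<le> induced_norm N A * dual_norm N z" .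
qed

definition right_dini_le :: "('a::real_vector \<Rightarrow> real) \<Rightarrow> 'a \<Rightarrow> 'a \<Rightarrow> real \<Rightarrow> bool" where
  "right_dini_le Nn x w B \<longleftrightarrow>
     (\<forall>\<epsilon>>0. \<forall>\<^sub>F \<tau> in at_right 0. Nn (x + \<tau> *\<^sub>R w) \<le> Nn x + \<tau> * (B + \<epsilon>))"

lemma right_dini_le_approxI:
  assumes "\<And>\<epsilon>. \<epsilon> > 0 \<Longrightarrow> right_dini_le Nn x w (B + \<epsilon>)"
  shows "right_dini_le Nn x w B"
  unfolding right_dini_le_def
proof (intro allI impI)
  fix \<epsilon> :: real assume \<epsilon>: "\<epsilon> > 0"
  then have "right_dini_le Nn x w (B + \<epsilon> / 2)" by (intro assms) simp
  then have "\<forall>\<^sub>F \<tau> in at_right 0. Nn (x + \<tau> *\<^sub>R w) \<le> Nn x + \<tau> * (B + \<epsilon> / 2 + \<epsilon> / 2)"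
    unfolding right_dini_le_def using half_gt_zero[OF \<epsilon>] by blast
  then show "\<forall>\<^sub>F \<tau> in at_right 0. Nn (x + \<tau> *\<^sub>R w) \<le> Nn x + \<tau> * (B + \<epsilon>)"
    by (simp add: add.assoc)
qed

lemma right_dini_le_add:
  assumes N: "is_norm Nn" and dini: "right_dini_le Nn x w B" and r: "Nn r \<le> K"
  shows "right_dini_le Nn x (w + r) (B + K)"
  unfolding right_dini_le_def
proof (intro allI impI)
  fix \<epsilon> :: real assume "\<epsilon> > 0"
  with dini have "\<forall>\<^sub>F \<tau> in at_right 0. Nn (x + \<tau> *\<^sub>R w) \<le> Nn x + \<tau> * (B + \<epsilon>)"
    unfolding right_dini_le_def by blast
  then show "\<forall>\<^sub>F \<tau> in at_right 0. Nn (x + \<tau> *\<^sub>R (w + r)) \<le> Nn x + \<tau> * (B + K + \<epsilon>)"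
    using eventually_at_right_less
  proof eventually_elim
    case (elim \<tau>)
    have "Nn (x + \<tau> *\<^sub>R (w + r)) \<le> Nn (x + \<tau> *\<^sub>R w) + Nn (\<tau> *\<^sub>R r)"
      using is_normD(1)[OF N, of "x + \<tau> *\<^sub>R w" "\<tau> *\<^sub>R r"] by (simp add: scaleR_right_distrib add.assoc)
    also have "Nn (\<tau> *\<^sub>R r) \<le> \<tau> * K"
      using elim r by (simp add: is_normD(2)[OF N] mult_left_mono)
    finally show ?case using elim by (simp add: algebra_simps)
  qed
qed

lemma right_dini_le_sum:
  assumes N: "is_norm Nn" and J: "finite J" "J \<noteq> {}"
    and dini: "\<And>j. j \<in> J \<Longrightarrow> right_dini_le Nn x (w j) (B j)"
  shows "right_dini_le Nn (real (card J) *\<^sub>R x) (\<Sum>j\<in>J. w j) (\<Sum>j\<in>J. B j)"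
  unfolding right_dini_le_def
proof (intro allI impI)
  fix \<epsilon> :: real assume \<epsilon>: "\<epsilon> > 0"
  have n: "real (card J) > 0" using J by (simp add: card_gt_0_iff)
  have "\<forall>\<^sub>F \<tau> in at_right 0. \<forall>j\<in>J. Nn (x + \<tau> *\<^sub>R w j) \<le> Nn x + \<tau> * (B j + \<epsilon> / card J)"
    using dini \<epsilon> n unfolding right_dini_le_def by (intro eventually_ball_finite J(1)) auto
  then show "\<forall>\<^sub>F \<tau> in at_right 0. Nn (real (card J) *\<^sub>R x + \<tau> *\<^sub>R (\<Sum>j\<in>J. w j))
      \<le> Nn (real (card J) *\<^sub>R x) + \<tau> * ((\<Sum>j\<in>J. B j) + \<epsilon>)"
  proof eventually_elim
    case (elim \<tau>)
    have "Nn (real (card J) *\<^sub>R x + \<tau> *\<^sub>R (\<Sum>j\<in>J. w j)) = Nn (\<Sum>j\<in>J. x + \<tau> *\<^sub>R w j)"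
      by (simp add: sum.distrib scaleR_sum_right sum_constant_scaleR)
    also have "\<dots> \<le> (\<Sum>j\<in>J. Nn (x + \<tau> *\<^sub>R w j))" by (rule is_norm_sum[OF N])
    also have "\<dots> \<le> (\<Sum>j\<in>J. Nn x + \<tau> * (B j + \<epsilon> / card J))" using elim by (intro sum_mono) blast
    also have "\<dots> = Nn (real (card J) *\<^sub>R x) + \<tau> * ((\<Sum>j\<in>J. B j) + \<epsilon>)"
      using n by (simp add: is_normD(2)[OF N] sum.distrib sum_distrib_left algebra_simps)
    finally show ?case .
  qed
qed

lemma right_dini_le_growthI:
  assumes M: "is_norm M"
    and growth: "\<And>m. m > \<mu> \<Longrightarrow> \<forall>\<^sub>F \<tau> in at_right 0. M (z + \<tau> *\<^sub>R w) \<le> (1 + \<tau> * m) * M z"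
  shows "right_dini_le M z w (\<mu> * M z)"
  unfolding right_dini_le_def
proof (intro allI impI)
  fix \<epsilon> :: real assume \<epsilon>: "\<epsilon> > 0"
  define m where "m = \<mu> + \<epsilon> / (M z + 1)"
  have Mz: "M z \<ge> 0" by (rule is_norm_nonneg[OF M])
  then have m: "m > \<mu>" "(m - \<mu>) * M z \<le> \<epsilon>"
    unfolding m_def using \<epsilon> by (auto simp: field_simps)
  from growth[OF m(1)] eventually_at_right_less
  show "\<forall>\<^sub>F \<tau> in at_right 0. M (z + \<tau> *\<^sub>R w) \<le> M z + \<tau> * (\<mu> * M z + \<epsilon>)"
  proof eventually_elim
    case (elim \<tau>)
    have "\<tau> * ((m - \<mu>) * M z) \<le> \<tau> * \<epsilon>" using elim m(2) by (intro mult_left_mono) auto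
    then show ?case using elim by (simp add: algebra_simps)
  qed
qed

lemma right_dini_le_matrix:
  fixes N :: "real^'n \<Rightarrow> real"
  assumes N: "is_norm N" and A: "log_norm N A \<le> \<mu>"
  shows "right_dini_le N z (A *v z) (\<mu> * N z)"
proof (rule right_dini_le_growthI[OF N])
  fix m assume "m > \<mu>"
  with A have "log_norm N A < m" by simp
  then show "\<forall>\<^sub>F \<tau> in at_right 0. N (z + \<tau> *\<^sub>R (A *v z)) \<le> (1 + \<tau> * m) * N z"
  proof (rule eventually_induced_norm_le[OF N, THEN eventually_mono])
    fix \<tau> assume \<tau>: "induced_norm N (mat 1 + \<tau> *\<^sub>R A) \<le> 1 + \<tau> * m"
    have "z + \<tau> *\<^sub>R (A *v z) = (mat 1 + \<tau> *\<^sub>R A) *v z"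
      by (simp add: matrix_vector_mult_add_rdistrib scaleR_matrix_vector_assoc)
    then have "N (z + \<tau> *\<^sub>R (A *v z)) \<le> induced_norm N (mat 1 + \<tau> *\<^sub>R A) * N z"
      by (simp only: induced_norm_bound[OF N])
    also have "\<dots> \<le> (1 + \<tau> * m) * N z" using \<tau> is_norm_nonneg[OF N] by (rule mult_right_mono)
    finally show "N (z + \<tau> *\<^sub>R (A *v z)) \<le> (1 + \<tau> * m) * N z" .
  qed
qed

lemma right_dini_le_transpose:
  fixes N :: "real^'n \<Rightarrow> real"
  assumes N: "is_norm N" and A: "log_norm N A \<le> \<mu>"
  shows "right_dini_le (dual_norm N) z (transpose A *v z) (\<mu> * dual_norm N z)"
proof (rule right_dini_le_growthI[OF is_norm_dual_norm[OF N]])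
  fix m assume "m > \<mu>"
  with A have "log_norm N A < m" by simp
  then show "\<forall>\<^sub>F \<tau> in at_right 0. dual_norm N (z + \<tau> *\<^sub>R (transpose A *v z)) \<le> (1 + \<tau> * m) * dual_norm N z"
  proof (rule eventually_induced_norm_le[OF N, THEN eventually_mono])
    fix \<tau> assume \<tau>: "induced_norm N (mat 1 + \<tau> *\<^sub>R A) \<le> 1 + \<tau> * m"
    have "transpose (mat 1 + \<tau> *\<^sub>R A) = mat 1 + \<tau> *\<^sub>R transpose A"
      by (simp add: transpose_def mat_def vec_eq_iff)
    moreover have "z + \<tau> *\<^sub>R (transpose A *v z) = (mat 1 + \<tau> *\<^sub>R transpose A) *v z"
      by (simp only: matrix_vector_mult_add_rdistrib scaleR_matrix_vector_assoc matrix_vector_mul_lid)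
    ultimately have "z + \<tau> *\<^sub>R (transpose A *v z) = transpose (mat 1 + \<tau> *\<^sub>R A) *v z"
      by simp
    then have "dual_norm N (z + \<tau> *\<^sub>R (transpose A *v z))
        \<le> induced_norm N (mat 1 + \<tau> *\<^sub>R A) * dual_norm N z"
      by (simp only: dual_norm_transpose_le[OF N])
    also have "\<dots> \<le> (1 + \<tau> * m) * dual_norm N z"
      using \<tau> is_norm_nonneg[OF is_norm_dual_norm[OF N]] by (rule mult_right_mono)
    finally show "dual_norm N (z + \<tau> *\<^sub>R (transpose A *v z)) \<le> (1 + \<tau> * m) * dual_norm N z" .
  qed
qed

lemma onorm_matrix_le_card_norm: "onorm ((*v) (M::real^'n^'m)) \<le> real CARD('m) * real CARD('n) * norm M"
proof (rule onorm_le_matrix_component)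
  fix i j
  have "\<bar>M $ i $ j\<bar> \<le> norm (M $ i)" by (rule component_le_norm_cart)
  also have "\<dots> \<le> norm M" by (rule Finite_Cartesian_Product.norm_nth_le)
  finally show "\<bar>M $ i $ j\<bar> \<le> norm M" .
qed

lemma uniform_linearization:
  fixes g :: "real^'n \<Rightarrow> real^'m" and A :: "real^'n \<Rightarrow> real^'n^'m"
  assumes S: "convex S" "compact S"
    and der: "\<And>z. z \<in> S \<Longrightarrow> (g has_derivative (\<lambda>v. A z *v v)) (at z within S)"
    and cont: "continuous_on S A" and \<eta>: "\<eta> > 0"
  obtains \<delta> where "\<delta> > 0" "\<And>z z'. z \<in> S \<Longrightarrow> z' \<in> S \<Longrightarrow> dist z' z < \<delta> \<Longrightarrow>
      norm (g z' - g z - A z *v (z' - z)) \<le> \<eta> * norm (z' - z)"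
proof -
  define \<eta>' where "\<eta>' = \<eta> / (real CARD('m) * real CARD('n))"
  have \<eta>': "\<eta>' > 0" "real CARD('m) * real CARD('n) * \<eta>' = \<eta>" unfolding \<eta>'_def using \<eta> by auto
  obtain \<delta> where \<delta>: "\<delta> > 0" "\<And>z z'. z \<in> S \<Longrightarrow> z' \<in> S \<Longrightarrow> dist z' z < \<delta> \<Longrightarrow> dist (A z') (A z) < \<eta>'"
    using compact_uniformly_continuous[OF cont S(2)] \<eta>'(1) unfolding uniformly_continuous_on_def by metis
  show ?thesis
  proof (rule that[OF \<delta>(1)])
    fix z z' assume zz: "z \<in> S" "z' \<in> S" "dist z' z < \<delta>"
    have seg: "closed_segment z z' \<subseteq> S" using zz S(1) by (intro closed_segment_subset) auto
    have "norm (g z' - g z - A z *v (z' - z)) \<le> norm (z' - z) * \<eta>"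
    proof (rule differentiable_bound_linearization[where S="closed_segment z z'" and f'="\<lambda>w v. A w *v v"])
      show "z + t *\<^sub>R (z' - z) \<in> closed_segment z z'" if "t \<in> {0..1}" for t
        using that unfolding in_segment by (intro exI[of _ t]) (auto simp: algebra_simps)
      show "(g has_derivative (\<lambda>v. A w *v v)) (at w within closed_segment z z')"
        if "w \<in> closed_segment z z'" for w
        using der[of w] seg that by (auto intro: has_derivative_subset)
      fix w assume w: "w \<in> closed_segment z z'"
      then have "dist w z \<le> dist z z'" by (simp add: dist_in_closed_segment)
      then have Aw: "norm (A w - A z) \<le> \<eta>'"
        using \<delta>(2)[of z w] zz seg w by (auto simp: dist_commute dist_norm)
      have "(\<lambda>v. A w *v v) - (\<lambda>v. A z *v v) = (*v) (A w - A z)"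
        by (auto simp: fun_diff_def matrix_vector_mult_diff_rdistrib)
      then have "onorm ((\<lambda>v. A w *v v) - (\<lambda>v. A z *v v))
          \<le> real CARD('m) * real CARD('n) * norm (A w - A z)"
        by (simp only: onorm_matrix_le_card_norm)
      also have "\<dots> \<le> \<eta>" using mult_left_mono[OF Aw, of "real CARD('m) * real CARD('n)"] \<eta>'(2) by simp
      finally show "onorm ((\<lambda>v. A w *v v) - (\<lambda>v. A z *v v)) \<le> \<eta>" .
    qed simp
    then show "norm (g z' - g z - A z *v (z' - z)) \<le> \<eta> * norm (z' - z)" by (simp add: mult.commute)
  qed
qed

text \<open>Splitting the segment from \<open>y\<close> to \<open>x\<close> into \<open>m\<close> pieces of length below the
  uniform linearization radius reduces the claim to the linear case on each piece, where
  only the finitely many matrices \<open>A (p j)\<close> enter.\<close>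

lemma right_dini_le_one_sided:
  fixes N :: "real^'n \<Rightarrow> real" and g :: "real^'n \<Rightarrow> real^'n" and A :: "real^'n \<Rightarrow> real^'n^'n"
  assumes N: "is_norm N"
    and der: "\<And>z. (g has_derivative (\<lambda>v. A z *v v)) (at z)"
    and cont: "continuous_on UNIV A"
    and A: "\<And>z. log_norm N (A z) \<le> \<mu>"
  shows "right_dini_le N (x - y) (g x - g y) (\<mu> * N (x - y))"
proof (rule right_dini_le_approxI)
  fix \<epsilon> :: real assume \<epsilon>: "\<epsilon> > 0"
  define e where "e = x - y"
  obtain C where C: "C > 0" "\<And>v. N v \<le> C * norm v" using is_norm_le_const_norm[OF N] by blast
  define \<eta> where "\<eta> = \<epsilon> / (C * norm e + 1)"
  have ne: "C * norm e + 1 > 0" using C(1) by (simp add: add_nonneg_pos)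
  then have \<eta>0: "\<eta> > 0" unfolding \<eta>_def using \<epsilon> by simp
  have "C * (\<eta> * norm e) = \<epsilon> * (C * norm e / (C * norm e + 1))"
    unfolding \<eta>_def using ne by (simp add: field_simps)
  also have "\<dots> \<le> \<epsilon>" using \<epsilon> ne by (intro mult_left_le) auto
  finally have \<eta>: "\<eta> > 0" "C * (\<eta> * norm e) \<le> \<epsilon>" using \<eta>0 by auto
  obtain \<delta> where \<delta>: "\<delta> > 0" "\<And>z z'. z \<in> closed_segment y x \<Longrightarrow> z' \<in> closed_segment y x \<Longrightarrow>
      dist z' z < \<delta> \<Longrightarrow> norm (g z' - g z - A z *v (z' - z)) \<le> \<eta> * norm (z' - z)"
    using uniform_linearization[of "closed_segment y x" g A \<eta>] der cont \<eta>(1)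
    by (auto intro: has_derivative_at_withinI continuous_on_subset)
  obtain m :: nat where m: "norm e / \<delta> < real m" using reals_Archimedean2 by blast
  moreover have "0 \<le> norm e / \<delta>" using \<delta>(1) by simp
  ultimately have m0: "real m > 0" by linarith
  define d where "d = (1 / real m) *\<^sub>R e"
  define p where "p j = y + real j *\<^sub>R d" for j :: nat
  define err where "err j = g (p (Suc j)) - g (p j) - A (p j) *v d" for j
  have p: "p j \<in> closed_segment y x" if "j \<le> m" for j
  proof -
    have "p j = y + (real j / real m) *\<^sub>R (x - y)" unfolding p_def d_def e_def by simp
    also have "\<dots> = (1 - real j / real m) *\<^sub>R y + (real j / real m) *\<^sub>R x"
      by (simp add: algebra_simps)
    finally show ?thesis using that m0 unfolding in_segment by (intro exI[of _ "real j / real m"]) auto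
  qed
  have nd: "norm d = norm e / real m" unfolding d_def using m0 by simp
  have "N (err j) \<le> \<epsilon> / real m" if "j < m" for j
  proof -
    have "p (Suc j) - p j = d" unfolding p_def by (simp add: algebra_simps)
    moreover have "norm d < \<delta>" using m m0 \<delta>(1) unfolding nd by (simp add: field_simps)
    ultimately have "norm (err j) \<le> \<eta> * norm d"
      using \<delta>(2)[of "p j" "p (Suc j)"] p[of j] p[of "Suc j"] that
      unfolding err_def by (simp add: dist_norm)
    then have "C * norm (err j) \<le> C * (\<eta> * norm d)" using C(1) by (intro mult_left_mono) auto
    then have "N (err j) \<le> C * (\<eta> * norm d)" using C(2)[of "err j"] by linarith
    also have "\<dots> = C * (\<eta> * norm e) / real m" unfolding nd by simp
    also have "\<dots> \<le> \<epsilon> / real m" using \<eta>(2) m0 by (intro divide_right_mono) auto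
    finally show ?thesis .
  qed
  then have "right_dini_le N d (A (p j) *v d + err j) (\<mu> * N d + \<epsilon> / real m)" if "j < m" for j
    using that by (intro right_dini_le_add[OF N] right_dini_le_matrix[OF N A])
  then have "right_dini_le N (real (card {..<m}) *\<^sub>R d) (\<Sum>j<m. A (p j) *v d + err j)
      (\<Sum>j<m. \<mu> * N d + \<epsilon> / real m)"
    using m0 by (intro right_dini_le_sum[OF N]) auto
  moreover have "real (card {..<m}) *\<^sub>R d = e" using m0 unfolding d_def by simp
  moreover have "(\<Sum>j<m. A (p j) *v d + err j) = g (p m) - g (p 0)"
    unfolding err_def using sum_lessThan_telescope[of "\<lambda>j. g (p j)" m] by simp
  moreover have "p m = x" "p 0 = y" using m0 unfolding p_def d_def e_def by simp_all
  moreover have "N d = N e / real m" unfolding d_def by (simp add: is_normD(2)[OF N])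
  then have "(\<Sum>j<m. \<mu> * N d + \<epsilon> / real m) = \<mu> * N e + \<epsilon>"
    using m0 by (simp add: field_simps)
  ultimately show "right_dini_le N (x - y) (g x - g y) (\<mu> * N (x - y) + \<epsilon>)"
    unfolding e_def by simp
qed

lemma exp_times_one_minus_bounds:
  fixes x :: real
  assumes "0 \<le> x" "x \<le> 1"
  shows "exp x * (1 - x) \<le> 1" "1 - x\<^sup>2 \<le> exp x * (1 - x)"
proof -
  have "exp x * (1 - x) \<le> exp x * exp (- x)"
    using exp_ge_add_one_self[of "- x"] by (intro mult_left_mono) auto
  then show "exp x * (1 - x) \<le> 1" by (simp add: exp_minus)
  have "(1 + x) * (1 - x) \<le> exp x * (1 - x)"
    using exp_ge_add_one_self[of x] assms by (intro mult_right_mono) auto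
  then show "1 - x\<^sup>2 \<le> exp x * (1 - x)" by (simp add: power2_eq_square algebra_simps)
qed

lemma exp_minus_inverse_bounds:
  fixes x :: real
  assumes x: "0 \<le> x"
  shows "exp (- x) \<le> 1 / (1 + x)" "1 / (1 + x) - exp (- x) \<le> x\<^sup>2"
proof -
  have "1 / exp x \<le> 1 / (1 + x)" using exp_ge_add_one_self[of x] x by (intro divide_left_mono) auto
  then show "exp (- x) \<le> 1 / (1 + x)" by (simp add: exp_minus field_simps)
  have "1 \<le> (1 - x + x\<^sup>2) * (1 + x)" using x by (simp add: power2_eq_square algebra_simps)
  then have "1 / (1 + x) \<le> 1 - x + x\<^sup>2" using x by (simp add: divide_le_eq)
  then show "1 / (1 + x) - exp (- x) \<le> x\<^sup>2" using exp_ge_add_one_self[of "- x"] by simp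
qed

text \<open>The Gronwall estimate amounts to \<open>\<psi> t = exp (c * t) * (Nn (e t) - K / c)\<close> not increasing.
  Over a step of length \<open>h\<close> to either side of a point where the one-sided estimate holds, the
  increment of \<open>\<psi>\<close> is \<open>O(h\<^sup>2)\<close> plus the linearization remainder.\<close>

lemma exp_weighted_step_right:
  fixes c K \<epsilon> h t Nt Ns Nr :: real
  assumes c: "c > 0" and h: "h \<ge> 0" "c * h \<le> 1" and K: "K \<ge> 0" and Nt: "Nt \<ge> 0"
    and Ns: "Ns \<le> Nt + h * (- c * Nt + K + \<epsilon>) + Nr" and r: "h * \<epsilon> + Nr \<ge> 0"
  shows "exp (c * (t + h)) * (Ns - K / c) - exp (c * t) * (Nt - K / c)
          \<le> exp (c * t) * (K * c * h\<^sup>2) + exp (c * (t + h)) * (h * \<epsilon> + Nr)"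
proof -
  define X where "X = exp (c * h)"
  have X: "X * (1 - c * h) \<le> 1" "1 - (c * h)\<^sup>2 \<le> X * (1 - c * h)"
    unfolding X_def using exp_times_one_minus_bounds[of "c * h"] c h by auto
  have et: "exp (c * (t + h)) = exp (c * t) * X" unfolding X_def by (simp add: distrib_left exp_add)
  have "(1 - c * h) * (Nt - K / c) = Nt + h * (- c * Nt + K) - K / c"
    using c by (simp add: field_simps)
  then have "Ns - K / c \<le> (1 - c * h) * (Nt - K / c) + (h * \<epsilon> + Nr)"
    using Ns by (simp add: algebra_simps)
  then have "exp (c * (t + h)) * (Ns - K / c) \<le> exp (c * t) * X * ((1 - c * h) * (Nt - K / c) + (h * \<epsilon> + Nr))"
    unfolding et by (intro mult_left_mono) (simp_all add: X_def)
  also have "\<dots> = exp (c * t) * ((X * (1 - c * h) - 1) * Nt + (1 - X * (1 - c * h)) * (K / c))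
      + exp (c * t) * (Nt - K / c) + exp (c * t) * X * (h * \<epsilon> + Nr)"
    by (simp add: algebra_simps)
  also have "(X * (1 - c * h) - 1) * Nt + (1 - X * (1 - c * h)) * (K / c) \<le> 0 + (c * h)\<^sup>2 * (K / c)"
  proof (rule add_mono)
    show "(X * (1 - c * h) - 1) * Nt \<le> 0" using X Nt by (simp add: mult_nonpos_nonneg)
    show "(1 - X * (1 - c * h)) * (K / c) \<le> (c * h)\<^sup>2 * (K / c)"
      using X K c by (intro mult_right_mono) auto
  qed
  also have "(0::real) + (c * h)\<^sup>2 * (K / c) = K * c * h\<^sup>2" using c by (simp add: power2_eq_square field_simps)
  finally show ?thesis using et by (simp add: mult_left_mono algebra_simps)
qed

lemma exp_weighted_step_left:
  fixes c K \<epsilon> h t Nt Ns Nr B :: real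
  assumes c: "c > 0" and h: "h \<ge> 0" and K: "K \<ge> 0" and Ns: "Ns \<ge> 0" "Ns \<le> B"
    and Nt: "Nt * (1 + c * h) \<le> Ns + h * (K + \<epsilon>) + Nr" and r: "h * \<epsilon> + Nr \<ge> 0"
  shows "exp (c * t) * (Nt - K / c) - exp (c * (t - h)) * (Ns - K / c)
          \<le> exp (c * t) * (B * (c * h)\<^sup>2 + (h * \<epsilon> + Nr))"
proof -
  define x where "x = c * h"
  have x: "x \<ge> 0" unfolding x_def using c h by simp
  define Y where "Y = exp (- x)"
  have Y: "Y \<le> 1 / (1 + x)" "1 / (1 + x) - Y \<le> x\<^sup>2"
    unfolding Y_def using exp_minus_inverse_bounds[OF x] by auto
  have et: "exp (c * (t - h)) = exp (c * t) * Y" unfolding Y_def x_def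
    by (simp add: right_diff_distrib exp_diff exp_minus field_simps)
  have "Nt \<le> (Ns + h * K + (h * \<epsilon> + Nr)) / (1 + x)"
    using Nt x unfolding x_def by (simp add: field_simps)
  then have "Nt - K / c \<le> (Ns + h * K + (h * \<epsilon> + Nr) - (K / c) * (1 + x)) / (1 + x)"
    using x by (simp add: diff_divide_distrib)
  also have "(K / c) * x = h * K" using c unfolding x_def by simp
  then have "(Ns + h * K + (h * \<epsilon> + Nr) - (K / c) * (1 + x)) / (1 + x) = (Ns - K / c + (h * \<epsilon> + Nr)) / (1 + x)"
    by (simp add: distrib_left)
  also have "\<dots> = (Ns - K / c) / (1 + x) + (h * \<epsilon> + Nr) / (1 + x)" by (simp add: add_divide_distrib)
  also have "(h * \<epsilon> + Nr) / (1 + x) \<le> h * \<epsilon> + Nr"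
  proof -
    have "0 \<le> (h * \<epsilon> + Nr) * x" using r x by simp
    then show ?thesis using x by (simp add: divide_le_eq algebra_simps)
  qed
  finally have "Nt - K / c - Y * (Ns - K / c)
      \<le> Ns * (1 / (1 + x) - Y) - (K / c) * (1 / (1 + x) - Y) + (h * \<epsilon> + Nr)"
    by (simp add: algebra_simps diff_divide_distrib)
  also have "\<dots> \<le> B * x\<^sup>2 + (h * \<epsilon> + Nr)"
  proof -
    have "(K / c) * (1 / (1 + x) - Y) \<ge> 0" using K c Y by simp
    moreover have "Ns * (1 / (1 + x) - Y) \<le> B * x\<^sup>2" using Ns Y by (intro mult_mono) auto
    ultimately show ?thesis by simp
  qed
  finally have "Nt - K / c - Y * (Ns - K / c) \<le> B * x\<^sup>2 + (h * \<epsilon> + Nr)" .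
  then have "exp (c * t) * (Nt - K / c - Y * (Ns - K / c)) \<le> exp (c * t) * (B * x\<^sup>2 + (h * \<epsilon> + Nr))"
    by (simp add: mult_left_mono)
  then show ?thesis unfolding et x_def by (simp add: algebra_simps)
qed

lemma exp_weighted_right_increment:
  fixes Nn :: "'a::real_vector \<Rightarrow> real"
  assumes N: "is_norm Nn" and c: "c > 0" and K: "K \<ge> 0" and \<epsilon>: "\<epsilon> \<ge> 0" and h: "h \<ge> 0" "c * h \<le> 1"
    and step: "Nn (et + h *\<^sub>R w) \<le> Nn et + h * (- c * Nn et + K + \<epsilon>)"
  shows "exp (c * (t + h)) * (Nn ev - K / c) - exp (c * t) * (Nn et - K / c)
    \<le> exp (c * t) * (K * c * h\<^sup>2) + exp (c * (t + h)) * (h * \<epsilon> + Nn (ev - et - h *\<^sub>R w))"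
proof (rule exp_weighted_step_right[OF c h K is_norm_nonneg[OF N]])
  have "Nn ev \<le> Nn (et + h *\<^sub>R w) + Nn (ev - et - h *\<^sub>R w)"
    using is_normD(1)[OF N, of "et + h *\<^sub>R w" "ev - et - h *\<^sub>R w"] by simp
  then show "Nn ev \<le> Nn et + h * (- c * Nn et + K + \<epsilon>) + Nn (ev - et - h *\<^sub>R w)" using step by linarith
  show "h * \<epsilon> + Nn (ev - et - h *\<^sub>R w) \<ge> 0" using h \<epsilon> is_norm_nonneg[OF N] by simp
qed

text \<open>\<open>v\<close> is the convex combination \<open>(\<tau> *\<^sub>R (v - h *\<^sub>R w) + h *\<^sub>R (v + \<tau> *\<^sub>R w)) /\<^sub>R (\<tau> + h)\<close>.\<close>

lemma is_norm_backward_step: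
  assumes N: "is_norm Nn" and \<tau>: "\<tau> > 0" and h: "h \<ge> 0"
    and forward: "Nn (v + \<tau> *\<^sub>R w) \<le> Nn v + \<tau> * D"
  shows "Nn v \<le> Nn (v - h *\<^sub>R w) + h * D"
proof -
  have "(\<tau> + h) * Nn v = Nn (\<tau> *\<^sub>R (v - h *\<^sub>R w) + h *\<^sub>R (v + \<tau> *\<^sub>R w))"
    using is_normD(2)[OF N, of "\<tau> + h" v] \<tau> h by (simp add: algebra_simps)
  also have "\<dots> \<le> \<tau> * Nn (v - h *\<^sub>R w) + h * Nn (v + \<tau> *\<^sub>R w)"
    using is_normD(1,2)[OF N] \<tau> h by (metis abs_of_nonneg less_imp_le)
  also have "\<dots> \<le> \<tau> * Nn (v - h *\<^sub>R w) + h * (Nn v + \<tau> * D)"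
    using forward h by (simp add: mult_left_mono)
  finally have "\<tau> * Nn v \<le> \<tau> * (Nn (v - h *\<^sub>R w) + h * D)" by (simp add: algebra_simps)
  then show ?thesis using \<tau> by simp
qed

lemma exp_weighted_left_increment:
  fixes Nn :: "'a::real_vector \<Rightarrow> real"
  assumes N: "is_norm Nn" and c: "c > 0" and K: "K \<ge> 0" and \<epsilon>: "\<epsilon> \<ge> 0" and h: "h \<ge> 0" and \<tau>: "\<tau> > 0"
    and step: "Nn (et + \<tau> *\<^sub>R w) \<le> Nn et + \<tau> * (- c * Nn et + K + \<epsilon>)" and B: "Nn eu \<le> B"
  shows "exp (c * t) * (Nn et - K / c) - exp (c * (t - h)) * (Nn eu - K / c)
    \<le> exp (c * t) * (B * (c * h)\<^sup>2 + (h * \<epsilon> + Nn (et - eu - h *\<^sub>R w)))"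
proof (rule exp_weighted_step_left[OF c h K is_norm_nonneg[OF N] B])
  have "Nn et \<le> Nn (et - h *\<^sub>R w) + h * (- c * Nn et + K + \<epsilon>)"
    by (rule is_norm_backward_step[OF N \<tau> h step])
  moreover have "Nn (et - h *\<^sub>R w) \<le> Nn eu + Nn (et - eu - h *\<^sub>R w)"
    using is_normD(1)[OF N, of eu "et - eu - h *\<^sub>R w"] by simp
  ultimately show "Nn et * (1 + c * h) \<le> Nn eu + h * (K + \<epsilon>) + Nn (et - eu - h *\<^sub>R w)"
    by (simp add: algebra_simps)
  show "h * \<epsilon> + Nn (et - eu - h *\<^sub>R w) \<ge> 0" using h \<epsilon> is_norm_nonneg[OF N] by simp
qed

text \<open>Here \<open>eu, et, ev\<close> stand for the values of \<open>e\<close> at \<open>u \<le> t \<le> v\<close> and \<open>w\<close> for its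
  derivative at the tag \<open>t\<close>.\<close>

lemma exp_weighted_tag_estimate:
  fixes Nn :: "'a::real_vector \<Rightarrow> real"
  assumes N: "is_norm Nn" and c: "c > 0" and K: "K \<ge> 0" and \<epsilon>: "\<epsilon> \<ge> 0"
    and uv: "u \<le> t" "t \<le> v" "c * (v - t) \<le> 1" "t - u < d" "v - t < d"
    and small: "K * c * (v - t) \<le> \<epsilon>" "B * c\<^sup>2 * (t - u) \<le> \<epsilon>"
    and B: "Nn eu \<le> B"
    and local: "\<And>\<tau>. 0 < \<tau> \<Longrightarrow> \<tau> < d \<Longrightarrow> Nn (et + \<tau> *\<^sub>R w) \<le> Nn et + \<tau> * (- c * Nn et + K + \<epsilon>)"
  shows "exp (c * v) * (Nn ev - K / c) - exp (c * u) * (Nn eu - K / c)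
    \<le> exp (c * v) * (2 * \<epsilon> * (v - u) + Nn (ev - et - (v - t) *\<^sub>R w) + Nn (et - eu - (t - u) *\<^sub>R w))"
proof -
  define h1 h2 where "h1 = t - u" and "h2 = v - t"
  define r1 r2 where "r1 = Nn (et - eu - h1 *\<^sub>R w)" and "r2 = Nn (ev - et - h2 *\<^sub>R w)"
  have h: "h1 \<ge> 0" "h2 \<ge> 0" "c * h2 \<le> 1" using uv unfolding h1_def h2_def by auto
  have "Nn (et + h2 *\<^sub>R w) \<le> Nn et + h2 * (- c * Nn et + K + \<epsilon>)"
    using local[of h2] h uv unfolding h2_def by (cases "v = t") auto
  from exp_weighted_right_increment[OF N c K \<epsilon> h(2,3) this, of t ev]
  have right: "exp (c * v) * (Nn ev - K / c) - exp (c * t) * (Nn et - K / c)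
      \<le> exp (c * t) * (K * c * h2\<^sup>2) + exp (c * v) * (h2 * \<epsilon> + r2)"
    unfolding r2_def h2_def by simp
  have "0 < d / 2" "d / 2 < d" using uv by auto
  from exp_weighted_left_increment[OF N c K \<epsilon> h(1) this(1) local[OF this] B, of t]
  have left: "exp (c * t) * (Nn et - K / c) - exp (c * u) * (Nn eu - K / c)
      \<le> exp (c * t) * (B * (c * h1)\<^sup>2 + (h1 * \<epsilon> + r1))"
    unfolding r1_def h1_def by simp
  have "K * c * h2\<^sup>2 = (K * c * h2) * h2" "B * (c * h1)\<^sup>2 = (B * c\<^sup>2 * h1) * h1"
    by (simp_all add: power2_eq_square)
  then have quad: "K * c * h2\<^sup>2 \<le> \<epsilon> * h2" "B * (c * h1)\<^sup>2 \<le> \<epsilon> * h1"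
    using small h mult_right_mono unfolding h1_def h2_def by metis+
  have e: "exp (c * t) \<le> exp (c * v)" using c uv by simp
  have nn: "B \<ge> 0" "r1 \<ge> 0" "r2 \<ge> 0" using B is_norm_nonneg[OF N] order_trans unfolding r1_def r2_def by blast+
  then have "exp (c * t) * (B * (c * h1)\<^sup>2 + (h1 * \<epsilon> + r1)) \<le> exp (c * v) * (\<epsilon> * h1 + (h1 * \<epsilon> + r1))"
    using e quad h \<epsilon> by (rule_tac mult_mono) auto
  moreover have "exp (c * t) * (K * c * h2\<^sup>2) \<le> exp (c * v) * (\<epsilon> * h2)"
    using e quad h \<epsilon> K c by (rule_tac mult_mono) auto
  moreover have "exp (c * v) * (\<epsilon> * h2) + exp (c * v) * (h2 * \<epsilon> + r2) + exp (c * v) * (\<epsilon> * h1 + (h1 * \<epsilon> + r1))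
      = exp (c * v) * (2 * \<epsilon> * (v - u) + r2 + r1)"
    unfolding h1_def h2_def by (simp add: algebra_simps)
  ultimately show ?thesis using left right unfolding r1_def r2_def h1_def h2_def by linarith
qed

lemma tagged_division_of_real_member:
  fixes a b :: real
  assumes "p tagged_division_of {a..b}" "(t, k) \<in> p"
  obtains u v where "k = {u..v}" "a \<le> u" "u \<le> t" "t \<le> v" "v \<le> b"
proof -
  obtain u v where "k = cbox u v" using tagged_division_ofD(4)[OF assms] by blast
  moreover have "t \<in> k" "k \<subseteq> {a..b}" using tagged_division_ofD(2,3)[OF assms] by auto
  ultimately show ?thesis using that by (auto simp: box_real)
qed

lemma tagged_partial_division_of_shrink:
  fixes a b :: real and J :: "real \<Rightarrow> real set \<Rightarrow> real set"
  assumes p: "p tagged_division_of {a..b}"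
    and J: "\<And>t k. (t, k) \<in> p \<Longrightarrow> t \<in> J t k \<and> J t k \<subseteq> k \<and> (\<exists>u v. J t k = cbox u v)"
  shows "(\<lambda>(t, k). (t, J t k)) ` p tagged_partial_division_of cbox a b"
  unfolding tagged_partial_division_of_def
proof (intro conjI allI impI)
  show "finite ((\<lambda>(t, k). (t, J t k)) ` p)" using p by blast
next
  fix x K assume "(x, K) \<in> (\<lambda>(t, k). (t, J t k)) ` p"
  then obtain t k where tk: "(t, k) \<in> p" "x = t" "K = J t k" by auto
  then show "x \<in> K" "\<exists>a b. K = cbox a b" using J by blast+
  show "K \<subseteq> cbox a b" using tk J[OF tk(1)] tagged_division_ofD(3)[OF p tk(1)] by (auto simp: box_real)
next
  fix x1 K1 x2 K2
  assume a: "(x1, K1) \<in> (\<lambda>(t, k). (t, J t k)) ` p \<and> (x2, K2) \<in> (\<lambda>(t, k). (t, J t k)) ` p \<and> (x1, K1) \<noteq> (x2, K2)"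
  then obtain t1 k1 t2 k2 where tk: "(t1, k1) \<in> p" "(t2, k2) \<in> p" "K1 = J t1 k1" "K2 = J t2 k2"
    and ne: "(t1, k1) \<noteq> (t2, k2)" by auto
  have "interior K1 \<subseteq> interior k1" "interior K2 \<subseteq> interior k2"
    using J[OF tk(1)] J[OF tk(2)] tk by (simp_all add: interior_mono)
  then show "interior K1 \<inter> interior K2 = {}" using tagged_division_ofD(5)[OF p tk(1,2) ne] by blast
qed

text \<open>Distinct tagged intervals can only shrink to the same tagged interval if it is null, so the
  reindexing loses nothing.\<close>

lemma Henstock_lemma_tag_subintervals:
  fixes F :: "real \<Rightarrow> 'a::euclidean_space"
  assumes p: "p tagged_division_of {a..b}" and fine: "\<gamma> fine p"
    and H: "\<And>q. q tagged_partial_division_of cbox a b \<Longrightarrow> \<gamma> fine q \<Longrightarrow>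
              (\<Sum>(x,k)\<in>q. norm (Henstock_Kurzweil_Integration.content (k::real set) *\<^sub>R F x - integral k F)) < \<epsilon>"
    and J: "\<And>t k. (t,k) \<in> p \<Longrightarrow> t \<in> J t k \<and> J t k \<subseteq> k \<and> (\<exists>u v. J t k = cbox u v)"
    and Jc: "\<And>t k. (t,k) \<in> p \<Longrightarrow> Henstock_Kurzweil_Integration.content (J t k) \<noteq> 0 \<Longrightarrow> interior (J t k) \<noteq> {}"
  shows "(\<Sum>(t,k)\<in>p. norm (Henstock_Kurzweil_Integration.content (J t k) *\<^sub>R F t - integral (J t k) F)) < \<epsilon>"
proof -
  define hh where "hh = (\<lambda>(t::real,k::real set). (t, J t k))"
  define g where "g = (\<lambda>(x::real,k::real set). norm (Henstock_Kurzweil_Integration.content k *\<^sub>R F x - integral k F))"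
  have "sum g (hh ` p) = sum (g \<circ> hh) p"
  proof (rule sum.reindex_nontrivial)
    show "finite p" using p by blast
    fix x y assume xy: "x \<in> p" "y \<in> p" "x \<noteq> y" "hh x = hh y"
    obtain t1 k1 where x: "x = (t1,k1)" by (cases x)
    obtain t2 k2 where y: "y = (t2,k2)" by (cases y)
    have eq: "t1 = t2" "J t1 k1 = J t2 k2" using xy(4) unfolding x y hh_def by auto
    show "g (hh x) = 0"
    proof (cases "Henstock_Kurzweil_Integration.content (J t1 k1) = 0")
      case True
      obtain u v where uv: "J t1 k1 = cbox u v" using J xy(1) x by blast
      have "integral (J t1 k1) F = 0" unfolding uv by (rule integral_null) (use True uv in simp)
      then show ?thesis unfolding x hh_def g_def using True by simp
    next
      case False
      then have "interior (J t1 k1) \<noteq> {}" using Jc xy(1) x by blast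
      moreover have "interior (J t1 k1) \<subseteq> interior k1" "interior (J t1 k1) \<subseteq> interior k2"
        using J xy(1,2) x y eq by (metis interior_mono)+
      ultimately show ?thesis
        using tagged_division_ofD(5)[OF p xy(1)[unfolded x] xy(2)[unfolded y]] xy(3) x y by blast
    qed
  qed
  moreover have "sum g (hh ` p) < \<epsilon>" unfolding g_def
  proof (rule H)
    show "hh ` p tagged_partial_division_of cbox a b"
      unfolding hh_def using p J by (rule tagged_partial_division_of_shrink)
    show "\<gamma> fine hh ` p" using fine J unfolding fine_def hh_def by fastforce
  qed
  ultimately have "sum (g \<circ> hh) p < \<epsilon>" by simp
  then show ?thesis unfolding g_def hh_def by (simp add: comp_def case_prod_unfold)
qed

lemma tagged_division_tag_split:
  fixes F :: "real \<Rightarrow> 'a::euclidean_space"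
  assumes F: "F integrable_on {a..b}" and \<epsilon>: "\<epsilon> > 0" and \<delta>: "\<And>t. \<delta> t > 0"
  obtains p where "p tagged_division_of {a..b}" "(\<lambda>t. ball t (\<delta> t)) fine p"
    "(\<Sum>(t,k)\<in>p. norm (Henstock_Kurzweil_Integration.content {Inf k..t} *\<^sub>R F t - integral {Inf k..t} F)) < \<epsilon>"
    "(\<Sum>(t,k)\<in>p. norm (Henstock_Kurzweil_Integration.content {t..Sup k} *\<^sub>R F t - integral {t..Sup k} F)) < \<epsilon>"
proof -
  obtain \<gamma> where \<gamma>: "gauge \<gamma>" and H: "\<And>q. q tagged_partial_division_of cbox a b \<Longrightarrow> \<gamma> fine q \<Longrightarrow>
      (\<Sum>(x,k)\<in>q. norm (Henstock_Kurzweil_Integration.content (k::real set) *\<^sub>R F x - integral k F)) < \<epsilon>"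
    using Henstock_lemma[of F a b \<epsilon>] F \<epsilon> by auto
  have "gauge (\<lambda>t. \<gamma> t \<inter> ball t (\<delta> t))"
    using \<gamma> gauge_ball_dependent[of \<delta>] \<delta> by (intro gauge_Int) auto
  then obtain p where p: "p tagged_division_of {a..b}" "(\<lambda>t. \<gamma> t \<inter> ball t (\<delta> t)) fine p"
    using fine_division_exists_real by blast
  then have p\<gamma>: "\<gamma> fine p" and p\<delta>: "(\<lambda>t. ball t (\<delta> t)) fine p" unfolding fine_Int by auto
  show ?thesis
  proof (rule that[OF p(1) p\<delta>])
    show "(\<Sum>(t,k)\<in>p. norm (Henstock_Kurzweil_Integration.content {Inf k..t} *\<^sub>R F t - integral {Inf k..t} F)) < \<epsilon>"
    proof (rule Henstock_lemma_tag_subintervals[OF p(1) p\<gamma> H])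
      fix t k assume "(t, k) \<in> p"
      then obtain u v where "k = {u..v}" "u \<le> t" "t \<le> v" by (rule tagged_division_of_real_member[OF p(1)])
      then show "t \<in> {Inf k..t} \<and> {Inf k..t} \<subseteq> k \<and> (\<exists>u v. {Inf k..t} = cbox u v)" by auto
      assume "Henstock_Kurzweil_Integration.content {Inf k..t} \<noteq> 0"
      then show "interior {Inf k..t} \<noteq> {}" by (auto split: if_splits)
    qed
    show "(\<Sum>(t,k)\<in>p. norm (Henstock_Kurzweil_Integration.content {t..Sup k} *\<^sub>R F t - integral {t..Sup k} F)) < \<epsilon>"
    proof (rule Henstock_lemma_tag_subintervals[OF p(1) p\<gamma> H])
      fix t k assume "(t, k) \<in> p"
      then obtain u v where "k = {u..v}" "u \<le> t" "t \<le> v" by (rule tagged_division_of_real_member[OF p(1)])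
      then show "t \<in> {t..Sup k} \<and> {t..Sup k} \<subseteq> k \<and> (\<exists>u v. {t..Sup k} = cbox u v)" by auto
      assume "Henstock_Kurzweil_Integration.content {t..Sup k} \<noteq> 0"
      then show "interior {t..Sup k} \<noteq> {}" by (auto split: if_splits)
    qed
  qed
qed

lemma exp_weighted_local_bound:
  fixes e F :: "real \<Rightarrow> 'a::euclidean_space"
  assumes N: "is_norm Nn" and c: "c > 0" and K: "K \<ge> 0" and \<epsilon>: "\<epsilon> > 0"
    and C: "\<And>x. Nn x \<le> C * norm x"
    and B: "\<And>t. t \<in> {a..b} \<Longrightarrow> Nn (e t) \<le> B" "B \<ge> 0"
    and dini: "\<And>t. t \<in> {a..b} \<Longrightarrow> right_dini_le Nn (e t) (F t) (- c * Nn (e t) + K)"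
  obtains \<delta> where "\<And>t. \<delta> t > 0"
    "\<And>t u v. t \<in> {a..b} \<Longrightarrow> a \<le> u \<Longrightarrow> u \<le> t \<Longrightarrow> t \<le> v \<Longrightarrow> t - u < \<delta> t \<Longrightarrow> v - t < \<delta> t \<Longrightarrow>
      exp (c * v) * (Nn (e v) - K / c) - exp (c * u) * (Nn (e u) - K / c)
      \<le> exp (c * v) * (2 * \<epsilon> * (v - u) + C * norm (e v - e t - (v - t) *\<^sub>R F t)
           + C * norm (e t - e u - (t - u) *\<^sub>R F t))"
proof -
  define M where "M = K * c + B * c\<^sup>2 + 1"
  have "K * c \<ge> 0" "B * c\<^sup>2 \<ge> 0" using K c B(2) by simp_all
  then have M: "M > 0" "K * c \<le> M" "B * c\<^sup>2 \<le> M" unfolding M_def by linarith+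
  define \<delta>0 where "\<delta>0 = min (1 / c) (\<epsilon> / M)"
  have \<delta>0: "\<delta>0 > 0" using c \<epsilon> M by (simp add: \<delta>0_def)
  have "\<forall>t\<in>{a..b}. \<exists>d>0. \<forall>\<tau>>0. \<tau> < d \<longrightarrow> Nn (e t + \<tau> *\<^sub>R F t) \<le> Nn (e t) + \<tau> * (- c * Nn (e t) + K + \<epsilon>)"
    using dini \<epsilon> unfolding right_dini_le_def eventually_at_right_field by blast
  then obtain d where d: "\<And>t. t \<in> {a..b} \<Longrightarrow> d t > 0"
    "\<And>t \<tau>. t \<in> {a..b} \<Longrightarrow> 0 < \<tau> \<Longrightarrow> \<tau> < d t \<Longrightarrow>
       Nn (e t + \<tau> *\<^sub>R F t) \<le> Nn (e t) + \<tau> * (- c * Nn (e t) + K + \<epsilon>)"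
    by metis
  define \<delta> where "\<delta> t = (if t \<in> {a..b} then min (d t) \<delta>0 else 1)" for t
  show ?thesis
  proof (rule that)
    show "\<delta> t > 0" for t using d(1) \<delta>0 by (simp add: \<delta>_def)
    fix t u v assume t: "t \<in> {a..b}" and uv: "a \<le> u" "u \<le> t" "t \<le> v" "t - u < \<delta> t" "v - t < \<delta> t"
    then have step: "t - u < d t" "v - t < d t" "v - t \<le> 1 / c" "t - u \<le> \<epsilon> / M" "v - t \<le> \<epsilon> / M"
      by (auto simp: \<delta>_def \<delta>0_def)
    have "K * c * (v - t) \<le> \<epsilon>" "B * c\<^sup>2 * (t - u) \<le> \<epsilon>"
      using step(4,5) M uv mult_mono[of "K * c" M "v - t" "\<epsilon> / M"] mult_mono[of "B * c\<^sup>2" M "t - u" "\<epsilon> / M"]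
      by auto
    then have "exp (c * v) * (Nn (e v) - K / c) - exp (c * u) * (Nn (e u) - K / c)
        \<le> exp (c * v) * (2 * \<epsilon> * (v - u) + Nn (e v - e t - (v - t) *\<^sub>R F t) + Nn (e t - e u - (t - u) *\<^sub>R F t))"
      using step(1-3) uv t c \<epsilon> B(1)[of u] d(2)[OF t]
      by (intro exp_weighted_tag_estimate[OF N c K]) (auto simp: field_simps)
    also have "\<dots> \<le> exp (c * v) * (2 * \<epsilon> * (v - u) + C * norm (e v - e t - (v - t) *\<^sub>R F t)
        + C * norm (e t - e u - (t - u) *\<^sub>R F t))"
      using C \<epsilon> by (intro mult_left_mono add_mono) auto
    finally show "exp (c * v) * (Nn (e v) - K / c) - exp (c * u) * (Nn (e u) - K / c)
      \<le> exp (c * v) * (2 * \<epsilon> * (v - u) + C * norm (e v - e t - (v - t) *\<^sub>R F t)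
           + C * norm (e t - e u - (t - u) *\<^sub>R F t))" .
  qed
qed

lemma tagged_division_increment_le:
  fixes \<psi> :: "real \<Rightarrow> real"
  assumes ab: "a \<le> b" and p: "p tagged_division_of {a..b}"
    and tag: "\<And>x. x \<in> p \<Longrightarrow> \<psi> (Sup (snd x)) - \<psi> (Inf (snd x)) \<le> E * (\<eta> * (Sup (snd x) - Inf (snd x)) + R x)"
  shows "\<psi> b - \<psi> a \<le> E * (\<eta> * (b - a) + sum R p)"
proof -
  have "\<psi> b - \<psi> a = (\<Sum>x\<in>p. \<psi> (Sup (snd x)) - \<psi> (Inf (snd x)))"
    using additive_tagged_division_1[OF ab p, of \<psi>] by (simp add: case_prod_unfold)
  also have "\<dots> \<le> (\<Sum>x\<in>p. E * (\<eta> * (Sup (snd x) - Inf (snd x)) + R x))"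
    using tag by (rule sum_mono)
  also have "\<dots> = E * (\<eta> * (\<Sum>x\<in>p. Sup (snd x) - Inf (snd x)) + sum R p)"
    by (simp add: sum.distrib sum_distrib_left distrib_left)
  also have "(\<Sum>x\<in>p. Sup (snd x) - Inf (snd x)) = b - a"
    using additive_tagged_division_1[OF ab p, of "\<lambda>x. x"] by (simp add: case_prod_unfold)
  finally show ?thesis .
qed

lemma exp_weighted_increment_le:
  fixes e F :: "real \<Rightarrow> 'a::euclidean_space"
  assumes N: "is_norm Nn" and c: "c > 0" and K: "K \<ge> 0" and \<epsilon>: "\<epsilon> > 0" and ab: "a \<le> b"
    and C: "C \<ge> 0" "\<And>x. Nn x \<le> C * norm x"
    and B: "\<And>t. t \<in> {a..b} \<Longrightarrow> Nn (e t) \<le> B" "B \<ge> 0"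
    and integ: "\<And>s t. a \<le> s \<Longrightarrow> s \<le> t \<Longrightarrow> t \<le> b \<Longrightarrow> (F has_integral (e t - e s)) {s..t}"
    and dini: "\<And>t. t \<in> {a..b} \<Longrightarrow> right_dini_le Nn (e t) (F t) (- c * Nn (e t) + K)"
  shows "exp (c * b) * (Nn (e b) - K / c) - exp (c * a) * (Nn (e a) - K / c)
    \<le> exp (c * b) * (2 * \<epsilon> * (b - a + C))"
proof -
  define \<psi> where "\<psi> t = exp (c * t) * (Nn (e t) - K / c)" for t
  define D1 where "D1 = (\<lambda>(t, k). norm (Henstock_Kurzweil_Integration.content {Inf k..t} *\<^sub>R F t - integral {Inf k..t} F))"
  define D2 where "D2 = (\<lambda>(t, k). norm (Henstock_Kurzweil_Integration.content {t..Sup k} *\<^sub>R F t - integral {t..Sup k} F))"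
  obtain \<delta> where \<delta>: "\<And>t. \<delta> t > 0" and local:
    "\<And>t u v. t \<in> {a..b} \<Longrightarrow> a \<le> u \<Longrightarrow> u \<le> t \<Longrightarrow> t \<le> v \<Longrightarrow> t - u < \<delta> t \<Longrightarrow> v - t < \<delta> t \<Longrightarrow>
      exp (c * v) * (Nn (e v) - K / c) - exp (c * u) * (Nn (e u) - K / c)
      \<le> exp (c * v) * (2 * \<epsilon> * (v - u) + C * norm (e v - e t - (v - t) *\<^sub>R F t)
           + C * norm (e t - e u - (t - u) *\<^sub>R F t))"
    by (rule exp_weighted_local_bound[where a=a and b=b and e=e and F=F, OF N c K \<epsilon> C(2) B dini]) blast+
  have "F integrable_on {a..b}" using integ[of a b] ab by blast
  then obtain p where p: "p tagged_division_of {a..b}" "(\<lambda>t. ball t (\<delta> t)) fine p"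
    and S: "sum D1 p < \<epsilon>" "sum D2 p < \<epsilon>"
    unfolding D1_def D2_def by (rule tagged_division_tag_split[OF _ \<epsilon> \<delta>])
  have tag: "\<psi> (Sup (snd x)) - \<psi> (Inf (snd x))
      \<le> exp (c * b) * (2 * \<epsilon> * (Sup (snd x) - Inf (snd x)) + (C * D2 x + C * D1 x))"
    if "x \<in> p" for x
  proof -
    obtain t k where x: "x = (t, k)" by (cases x)
    then have tk: "(t, k) \<in> p" using that by simp
    obtain u v where k: "k = {u..v}" "a \<le> u" "u \<le> t" "t \<le> v" "v \<le> b"
      by (rule tagged_division_of_real_member[OF p(1) tk])
    then have uv: "u \<le> t" "t \<le> v" "a \<le> u" "v \<le> b" "Inf k = u" "Sup k = v" "t \<in> {a..b}" by auto
    have "k \<subseteq> ball t (\<delta> t)" using p(2) tk unfolding fine_def by blast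
    moreover have "u \<in> k" "v \<in> k" using k by auto
    ultimately have "u \<in> ball t (\<delta> t)" "v \<in> ball t (\<delta> t)" by auto
    then have "t - u < \<delta> t" "v - t < \<delta> t" by (auto simp: dist_real_def)
    moreover have "integral {u..t} F = e t - e u" "integral {t..v} F = e v - e t"
      using integ[of u t] integ[of t v] uv by (auto intro: integral_unique)
    then have "D1 (t, k) = norm (e t - e u - (t - u) *\<^sub>R F t)" "D2 (t, k) = norm (e v - e t - (v - t) *\<^sub>R F t)"
      unfolding D1_def D2_def using uv by (simp_all add: norm_minus_commute)
    ultimately have "\<psi> v - \<psi> u \<le> exp (c * v) * (2 * \<epsilon> * (v - u) + (C * D2 (t, k) + C * D1 (t, k)))"
      unfolding \<psi>_def using local[of t u v] uv by (simp add: add.assoc)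
    also have "\<dots> \<le> exp (c * b) * (2 * \<epsilon> * (v - u) + (C * D2 (t, k) + C * D1 (t, k)))"
      using uv \<epsilon> C c unfolding D1_def D2_def by (intro mult_right_mono) auto
    finally show ?thesis using uv x by simp
  qed
  have "\<psi> b - \<psi> a \<le> exp (c * b) * (2 * \<epsilon> * (b - a) + (\<Sum>x\<in>p. C * D2 x + C * D1 x))"
    using tag by (rule tagged_division_increment_le[OF ab p(1)])
  also have "(\<Sum>x\<in>p. C * D2 x + C * D1 x) = C * sum D2 p + C * sum D1 p"
    by (simp add: sum.distrib sum_distrib_left)
  also have "\<dots> \<le> 2 * \<epsilon> * C"
    using mult_left_mono[OF less_imp_le[OF S(1)] C(1)] mult_left_mono[OF less_imp_le[OF S(2)] C(1)]
    by (simp add: algebra_simps)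
  finally show ?thesis unfolding \<psi>_def by (simp add: distrib_left)
qed

lemma dissipative_gronwall:
  fixes e F :: "real \<Rightarrow> 'a::euclidean_space"
  assumes N: "is_norm Nn" and ab: "a \<le> b" and c: "c > 0" and K: "K \<ge> 0"
    and integ: "\<And>s t. a \<le> s \<Longrightarrow> s \<le> t \<Longrightarrow> t \<le> b \<Longrightarrow> (F has_integral (e t - e s)) {s..t}"
    and dini: "\<And>t. t \<in> {a..b} \<Longrightarrow> right_dini_le Nn (e t) (F t) (- c * Nn (e t) + K)"
  shows "Nn (e b) \<le> exp (- c * (b - a)) * Nn (e a) + K * (1 - exp (- c * (b - a))) / c"
proof -
  obtain C where C: "C > 0" "\<And>x. Nn x \<le> C * norm x" using is_norm_le_const_norm[OF N] by blast
  have "continuous_on {a..b} (\<lambda>t. e a + integral {a..t} F)"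
    using integ[of a b] ab by (intro continuous_intros indefinite_integral_continuous_1) blast
  moreover have "e a + integral {a..t} F = e t" if "t \<in> {a..b}" for t
    using integ[of a t] that by (simp add: integral_unique)
  ultimately have "continuous_on {a..b} e" by (metis (no_types, lifting) continuous_on_eq)
  then have "bounded (e ` {a..b})" by (intro compact_imp_bounded compact_continuous_image) auto
  then obtain B0 where B0: "\<And>t. t \<in> {a..b} \<Longrightarrow> norm (e t) \<le> B0" unfolding bounded_iff by blast
  have B: "Nn (e t) \<le> C * max B0 0" if "t \<in> {a..b}" for t
  proof -
    have "C * norm (e t) \<le> C * max B0 0" using B0[OF that] C(1) by (intro mult_left_mono) auto
    then show ?thesis using C(2)[of "e t"] by linarith
  qed
  have "exp (c * b) * (Nn (e b) - K / c) \<le> exp (c * a) * (Nn (e a) - K / c)"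
  proof (rule field_le_epsilon)
    fix \<eta> :: real assume \<eta>: "\<eta> > 0"
    define \<epsilon> where "\<epsilon> = \<eta> / (exp (c * b) * (2 * (b - a + C)))"
    have pos: "exp (c * b) * (2 * (b - a + C)) > 0" using ab C(1) by simp
    then have "\<epsilon> > 0" "exp (c * b) * (2 * \<epsilon> * (b - a + C)) = \<eta>"
      unfolding \<epsilon>_def using \<eta> by (simp_all add: field_simps)
    with exp_weighted_increment_le[OF N c K _ ab _ C(2) B _ integ dini] C(1)
    show "exp (c * b) * (Nn (e b) - K / c) \<le> exp (c * a) * (Nn (e a) - K / c) + \<eta>" by fastforce
  qed
  then have "Nn (e b) - K / c \<le> exp (c * a) / exp (c * b) * (Nn (e a) - K / c)"
    by (simp add: field_simps)
  also have "exp (c * a) / exp (c * b) = exp (- c * (b - a))" by (simp add: exp_diff[symmetric] algebra_simps)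
  finally show ?thesis by (simp add: algebra_simps diff_divide_distrib)
qed

lemma has_integral_reflect_at:
  fixes G :: "real \<Rightarrow> 'a::euclidean_space"
  assumes "(G has_integral i) {a..b}"
  shows "((\<lambda>s. G (T - s)) has_integral i) {T - b..T - a}"
proof -
  have "((\<lambda>x. G (x + T)) has_integral i) {a - T..b - T}"
    using has_integral_affinity'[of G i a b 1 T] assms by simp
  then have "((\<lambda>x. G (- x + T)) has_integral i) {- (b - T)..- (a - T)}"
    using has_integral_reflect_real[where f="\<lambda>x. G (x + T)" and i=i and a="a - T" and b="b - T"] by simp
  then show ?thesis by (simp add: algebra_simps)
qed

lemma dissipative_gronwall_backward:
  fixes e F :: "real \<Rightarrow> 'a::euclidean_space"
  assumes N: "is_norm Nn" and ab: "a \<le> b" and c: "c > 0" and K: "K \<ge> 0"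
    and integ: "\<And>s t. a \<le> s \<Longrightarrow> s \<le> t \<Longrightarrow> t \<le> b \<Longrightarrow> (F has_integral (e s - e t)) {s..t}"
    and dini: "\<And>t. t \<in> {a..b} \<Longrightarrow> right_dini_le Nn (e t) (F t) (- c * Nn (e t) + K)"
  shows "Nn (e a) \<le> exp (- c * (b - a)) * Nn (e b) + K * (1 - exp (- c * (b - a))) / c"
proof -
  have "Nn (e (a + b - b)) \<le> exp (- c * (b - a)) * Nn (e (a + b - a)) + K * (1 - exp (- c * (b - a))) / c"
  proof (rule dissipative_gronwall[OF N ab c K, where e="\<lambda>s. e (a + b - s)" and F="\<lambda>s. F (a + b - s)"])
    fix s t assume "a \<le> s" "s \<le> t" "t \<le> b"
    then have "(F has_integral (e (a + b - t) - e (a + b - s))) {a + b - t..a + b - s}"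
      by (intro integ) auto
    from has_integral_reflect_at[OF this, of "a + b"]
    show "((\<lambda>s. F (a + b - s)) has_integral (e (a + b - t) - e (a + b - s))) {s..t}" by simp
  qed (use dini in auto)
  then show ?thesis by simp
qed

lemma has_integral_increment:
  fixes g :: "real \<Rightarrow> 'a::euclidean_space"
  assumes st: "\<And>t. t \<in> {a..b} \<Longrightarrow> (g has_integral (X t - z)) {a..t}"
    and s: "a \<le> s" "s \<le> s'" "s' \<le> b"
  shows "(g has_integral (X s' - X s)) {s..s'}"
proof -
  have i1: "(g has_integral (X s' - z)) {a..s'}" using st s by auto
  have i2: "(g has_integral (X s - z)) {a..s}" using st s by auto
  have gi: "g integrable_on {a..s'}" using i1 by blast
  have gs: "g integrable_on {s..s'}" using integrable_subinterval_real[OF gi] s by auto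
  have "integral {a..s} g + integral {s..s'} g = integral {a..s'} g"
    using Henstock_Kurzweil_Integration.integral_combine[OF s(1,2) gi] .
  then have "integral {s..s'} g = X s' - X s" using i1 i2 by (simp add: integral_unique algebra_simps)
  then show ?thesis using gs by (metis has_integral_integral)
qed

lemma has_integral_increment_backward:
  fixes g :: "real \<Rightarrow> 'a::euclidean_space"
  assumes st: "\<And>t. t \<in> {a..b} \<Longrightarrow> (g has_integral (Y t - z)) {t..b}"
    and s: "a \<le> s" "s \<le> s'" "s' \<le> b"
  shows "(g has_integral (Y s - Y s')) {s..s'}"
proof -
  have i1: "(g has_integral (Y s - z)) {s..b}" using st s by auto
  have i2: "(g has_integral (Y s' - z)) {s'..b}" using st s by auto
  have gi: "g integrable_on {s..b}" using i1 by blast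
  have gs: "g integrable_on {s..s'}" using integrable_subinterval_real[OF gi] s by auto
  have "integral {s..s'} g + integral {s'..b} g = integral {s..b} g"
    using Henstock_Kurzweil_Integration.integral_combine[OF s(2,3) gi] .
  then have "integral {s..s'} g = Y s - Y s'" using i1 i2 by (simp add: integral_unique algebra_simps)
  then show ?thesis using gs by (metis has_integral_integral)
qed

locale control_space =
  fixes T :: real and U :: "(real^'k) set" and NU :: "real^'k \<Rightarrow> real"
  assumes T_nonneg: "T \<ge> 0" and U_compact: "compact U" and NU_norm: "is_norm NU"
begin

lemma control_in_U: "u \<in> controls T U \<Longrightarrow> t \<in> {0..T} \<Longrightarrow> u t \<in> U"
  unfolding controls_def by auto

lemma ctrl_dist_bdd_above:
  assumes "u \<in> controls T U" "v \<in> controls T U"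
  shows "bdd_above ((\<lambda>t. NU (u t - v t)) ` {0..T})"
proof -
  obtain R where R: "\<And>x. x \<in> U \<Longrightarrow> norm x \<le> R"
    using compact_imp_bounded[OF U_compact] unfolding bounded_iff by blast
  obtain C where C: "C > 0" "\<And>x. NU x \<le> C * norm x" using is_norm_le_const_norm[OF NU_norm] by blast
  have "NU (u t - v t) \<le> C * (R + R)" if "t \<in> {0..T}" for t
  proof -
    have "NU (u t - v t) \<le> C * norm (u t - v t)" by (rule C(2))
    also have "\<dots> \<le> C * (R + R)"
      using norm_triangle_ineq4[of "u t" "v t"] R[OF control_in_U[OF assms(1) that]]
        R[OF control_in_U[OF assms(2) that]] C(1)
      by (intro mult_left_mono) auto
    finally show ?thesis .
  qed
  then show ?thesis unfolding bdd_above_def by blast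
qed

lemma pointwise_le_ctrl_dist:
  assumes "u \<in> controls T U" "v \<in> controls T U" "t \<in> {0..T}"
  shows "NU (u t - v t) \<le> ctrl_dist T NU u v"
  unfolding ctrl_dist_def using assms by (intro cSup_upper ctrl_dist_bdd_above) auto

lemma ctrl_dist_leI:
  assumes "\<And>t. t \<in> {0..T} \<Longrightarrow> NU (u t - v t) \<le> B"
  shows "ctrl_dist T NU u v \<le> B"
  unfolding ctrl_dist_def using assms T_nonneg by (intro cSup_least) auto

lemma ctrl_dist_nonneg:
  assumes "u \<in> controls T U" "v \<in> controls T U"
  shows "ctrl_dist T NU u v \<ge> 0"
  using pointwise_le_ctrl_dist[OF assms, of 0] is_norm_nonneg[OF NU_norm, of "u 0 - v 0"] T_nonneg by auto

lemma ctrl_dist_commute: "ctrl_dist T NU u v = ctrl_dist T NU v u"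
  unfolding ctrl_dist_def using is_norm_commute[OF NU_norm] by metis

lemma ctrl_dist_triangle:
  assumes "u \<in> controls T U" "v \<in> controls T U" "w \<in> controls T U"
  shows "ctrl_dist T NU u w \<le> ctrl_dist T NU u v + ctrl_dist T NU v w"
proof (rule ctrl_dist_leI)
  fix t assume t: "t \<in> {0..T}"
  have "NU (u t - w t) \<le> NU (u t - v t) + NU (v t - w t)"
    using is_normD(1)[OF NU_norm, of "u t - v t" "v t - w t"] by simp
  also have "\<dots> \<le> ctrl_dist T NU u v + ctrl_dist T NU v w"
    using pointwise_le_ctrl_dist[OF assms(1,2) t] pointwise_le_ctrl_dist[OF assms(2,3) t] by simp
  finally show "NU (u t - w t) \<le> ctrl_dist T NU u v + ctrl_dist T NU v w" .
qed

text \<open>Controls vanish outside \<open>[0, T]\<close>, so \<open>ctrl_dist\<close> separates them.\<close>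

lemma ctrl_dist_le_0_imp_eq:
  assumes "u \<in> controls T U" "v \<in> controls T U" "ctrl_dist T NU u v \<le> 0"
  shows "u = v"
proof
  fix t
  show "u t = v t"
  proof (cases "t \<in> {0..T}")
    case True
    then have "NU (u t - v t) \<le> 0" using pointwise_le_ctrl_dist[OF assms(1,2) True] assms(3) by simp
    then show ?thesis using is_norm_nonneg[OF NU_norm, of "u t - v t"] is_normD(3)[OF NU_norm] by simp
  next
    case False
    then show ?thesis using assms unfolding controls_def by auto
  qed
qed

end

locale contraction_on_controls = control_space +
  fixes MSA :: "(real \<Rightarrow> real^'k) \<Rightarrow> real \<Rightarrow> real^'k" and L :: real
  assumes MSA_maps: "\<And>u. u \<in> controls T U \<Longrightarrow> MSA u \<in> controls T U"
    and contraction: "\<And>u v. u \<in> controls T U \<Longrightarrow> v \<in> controls T U \<Longrightarrow>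
        ctrl_dist T NU (MSA u) (MSA v) \<le> L * ctrl_dist T NU u v"
    and L: "0 \<le> L" "L < 1"
begin

lemma funpow_in_controls: "u \<in> controls T U \<Longrightarrow> (MSA ^^ i) u \<in> controls T U"
  by (induction i) (auto intro: MSA_maps)

lemma ctrl_dist_funpow_le:
  assumes "u \<in> controls T U" "v \<in> controls T U"
  shows "ctrl_dist T NU ((MSA ^^ i) u) ((MSA ^^ i) v) \<le> L ^ i * ctrl_dist T NU u v"
proof (induction i)
  case (Suc i)
  have "ctrl_dist T NU ((MSA ^^ Suc i) u) ((MSA ^^ Suc i) v) \<le> L * ctrl_dist T NU ((MSA ^^ i) u) ((MSA ^^ i) v)"
    using contraction[OF funpow_in_controls[OF assms(1)] funpow_in_controls[OF assms(2)]] by simp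
  also have "\<dots> \<le> L * (L ^ i * ctrl_dist T NU u v)" using Suc L by (intro mult_left_mono) auto
  finally show ?case by simp
qed simp

lemma ctrl_dist_funpow_start_le:
  assumes u0: "u0 \<in> controls T U"
  shows "ctrl_dist T NU u0 ((MSA ^^ m) u0) \<le> ctrl_dist T NU u0 (MSA u0) / (1 - L)"
proof (induction m)
  case 0
  have "ctrl_dist T NU u0 u0 \<le> 0" by (rule ctrl_dist_leI) (simp add: is_norm_zero[OF NU_norm])
  moreover have "0 \<le> ctrl_dist T NU u0 (MSA u0) / (1 - L)"
    using ctrl_dist_nonneg[OF u0 MSA_maps[OF u0]] L by simp
  ultimately show ?case by simp
next
  case (Suc m)
  have "ctrl_dist T NU u0 ((MSA ^^ Suc m) u0)
      \<le> ctrl_dist T NU u0 (MSA u0) + ctrl_dist T NU (MSA u0) ((MSA ^^ Suc m) u0)"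
    using ctrl_dist_triangle[OF u0 MSA_maps[OF u0] funpow_in_controls[OF u0]] by blast
  also have "ctrl_dist T NU (MSA u0) ((MSA ^^ Suc m) u0) \<le> L * ctrl_dist T NU u0 ((MSA ^^ m) u0)"
    using contraction[OF u0 funpow_in_controls[OF u0, of m]] by simp
  also have "\<dots> \<le> L * (ctrl_dist T NU u0 (MSA u0) / (1 - L))" using Suc L by (intro mult_left_mono) auto
  also have "ctrl_dist T NU u0 (MSA u0) + L * (ctrl_dist T NU u0 (MSA u0) / (1 - L))
      = ctrl_dist T NU u0 (MSA u0) / (1 - L)"
    using L by (simp add: field_simps)
  finally show ?case by simp
qed

lemma ctrl_dist_iterates_le:
  assumes u0: "u0 \<in> controls T U" and ij: "i \<le> j"
  shows "ctrl_dist T NU ((MSA ^^ i) u0) ((MSA ^^ j) u0) \<le> L ^ i * (ctrl_dist T NU u0 (MSA u0) / (1 - L))"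
proof -
  have "(MSA ^^ j) u0 = (MSA ^^ i) ((MSA ^^ (j - i)) u0)"
    using ij by (metis funpow_add le_add_diff_inverse comp_apply)
  then have "ctrl_dist T NU ((MSA ^^ i) u0) ((MSA ^^ j) u0) \<le> L ^ i * ctrl_dist T NU u0 ((MSA ^^ (j - i)) u0)"
    using ctrl_dist_funpow_le[OF u0 funpow_in_controls[OF u0]] by simp
  also have "\<dots> \<le> L ^ i * (ctrl_dist T NU u0 (MSA u0) / (1 - L))"
    using ctrl_dist_funpow_start_le[OF u0] L by (intro mult_left_mono) auto
  finally show ?thesis .
qed

lemma iterates_pointwise_cauchy:
  assumes u0: "u0 \<in> controls T U" and t: "t \<in> {0..T}" and ij: "i \<le> j"
  shows "NU ((MSA ^^ j) u0 t - (MSA ^^ i) u0 t) \<le> L ^ i * (ctrl_dist T NU u0 (MSA u0) / (1 - L))"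
  using pointwise_le_ctrl_dist[OF funpow_in_controls[OF u0] funpow_in_controls[OF u0] t, of i j]
    ctrl_dist_iterates_le[OF u0 ij] is_norm_commute[OF NU_norm, of "(MSA ^^ i) u0 t"] by simp

lemma iterates_pointwise_convergent:
  assumes u0: "u0 \<in> controls T U"
  shows "convergent (\<lambda>i. (MSA ^^ i) u0 t)"
proof (cases "t \<in> {0..T}")
  case t: True
  define D where "D = ctrl_dist T NU u0 (MSA u0) / (1 - L)"
  obtain C where C: "C > 0" "\<And>x. norm x \<le> C * NU x" using norm_le_const_is_norm[OF NU_norm] by blast
  have "(\<lambda>i. C * (L ^ i * D)) \<longlonglongrightarrow> C * (0 * D)" using L by (intro tendsto_intros LIMSEQ_power_zero) simp
  then have small: "\<forall>\<^sub>F i in sequentially. C * (L ^ i * D) < e" if "e > 0" for e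
    using that by (intro order_tendstoD(2)) auto
  show ?thesis
  proof (rule Cauchy_convergent, rule metric_CauchyI)
    fix e :: real assume "e > 0"
    then obtain M where M: "\<And>i. i \<ge> M \<Longrightarrow> C * (L ^ i * D) < e"
      using small unfolding eventually_sequentially by blast
    have "dist ((MSA ^^ m) u0 t) ((MSA ^^ n) u0 t) < e" if "M \<le> m" "M \<le> n" for m n
    proof -
      have "dist ((MSA ^^ m) u0 t) ((MSA ^^ n) u0 t)
          \<le> C * NU ((MSA ^^ max m n) u0 t - (MSA ^^ min m n) u0 t)"
        using C(2) is_norm_commute[OF NU_norm] by (cases "m \<le> n") (auto simp: dist_norm max_def min_def)
      also have "\<dots> \<le> C * (L ^ min m n * D)"
        using iterates_pointwise_cauchy[OF u0 t] C(1) unfolding D_def by (intro mult_left_mono) auto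
      finally show ?thesis using M[of "min m n"] that by simp
    qed
    then show "\<exists>M. \<forall>m\<ge>M. \<forall>n\<ge>M. dist ((MSA ^^ m) u0 t) ((MSA ^^ n) u0 t) < e" by blast
  qed
next
  case False
  then show ?thesis using funpow_in_controls[OF u0] unfolding controls_def by (simp add: convergent_const)
qed

text \<open>The pointwise limit of the iterates is again measurable with values in the closed set
  \<open>U\<close>, hence a control.\<close>

lemma iterates_converge:
  assumes u0: "u0 \<in> controls T U"
  obtains uh where "uh \<in> controls T U"
    "\<And>i. ctrl_dist T NU ((MSA ^^ i) u0) uh \<le> L ^ i * (ctrl_dist T NU u0 (MSA u0) / (1 - L))"
proof -
  define us where "us i = (MSA ^^ i) u0" for i
  have us: "us i \<in> controls T U" for i unfolding us_def by (rule funpow_in_controls[OF u0])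
  obtain uh where lim: "\<And>t. (\<lambda>i. us i t) \<longlonglongrightarrow> uh t"
    using iterates_pointwise_convergent[OF u0] unfolding us_def convergent_def by metis
  have "uh \<in> controls T U"
    unfolding controls_def
  proof (intro CollectI conjI ballI allI impI)
    show "uh \<in> borel_measurable lborel"
      by (rule borel_measurable_LIMSEQ_metric[where f=us]) (use us lim in \<open>auto simp: controls_def\<close>)
    show "uh t \<in> U" if "t \<in> {0..T}" for t
      by (rule closed_sequentially[OF compact_imp_closed[OF U_compact] _ lim]) (use us that control_in_U in auto)
    show "uh t = 0" if "t \<notin> {0..T}" for t
      using lim[of t] us that LIMSEQ_unique[OF _ tendsto_const] unfolding controls_def by auto
  qed
  moreover have "ctrl_dist T NU (us i) uh \<le> L ^ i * (ctrl_dist T NU u0 (MSA u0) / (1 - L))" for i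
  proof (rule ctrl_dist_leI)
    fix t assume t: "t \<in> {0..T}"
    have "(\<lambda>j. NU (us j t - us i t)) \<longlonglongrightarrow> NU (uh t - us i t)"
      using is_norm_continuous_on[OF NU_norm, of UNIV] lim[of t]
      by (intro continuous_on_tendsto_compose[where f=NU and s=UNIV] tendsto_intros) auto
    then have "NU (uh t - us i t) \<le> L ^ i * (ctrl_dist T NU u0 (MSA u0) / (1 - L))"
      using iterates_pointwise_cauchy[OF u0 t] unfolding us_def by (intro Lim_bounded[where M=i]) auto
    then show "NU (us i t - uh t) \<le> L ^ i * (ctrl_dist T NU u0 (MSA u0) / (1 - L))"
      using is_norm_commute[OF NU_norm] by metis
  qed
  ultimately show ?thesis using that unfolding us_def by blast
qed

lemma fixed_point_exists:
  assumes u0: "u0 \<in> controls T U"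
  obtains uh where "uh \<in> controls T U" "MSA uh = uh"
proof -
  define D where "D = ctrl_dist T NU u0 (MSA u0) / (1 - L)"
  obtain uh where uh: "uh \<in> controls T U" "\<And>i. ctrl_dist T NU ((MSA ^^ i) u0) uh \<le> L ^ i * D"
    using iterates_converge[OF u0] unfolding D_def by blast
  have "ctrl_dist T NU (MSA uh) uh \<le> 2 * D * L ^ Suc i" for i
  proof -
    have "ctrl_dist T NU (MSA uh) uh
        \<le> ctrl_dist T NU (MSA uh) (MSA ((MSA ^^ i) u0)) + ctrl_dist T NU ((MSA ^^ Suc i) u0) uh"
      using ctrl_dist_triangle[OF MSA_maps[OF uh(1)] funpow_in_controls[OF u0, of "Suc i"] uh(1)] by simp
    also have "ctrl_dist T NU (MSA uh) (MSA ((MSA ^^ i) u0)) \<le> L * ctrl_dist T NU uh ((MSA ^^ i) u0)"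
      using contraction[OF uh(1) funpow_in_controls[OF u0]] .
    also have "\<dots> \<le> L * (L ^ i * D)"
      using uh(2)[of i] L ctrl_dist_commute by (intro mult_left_mono) auto
    also have "L * (L ^ i * D) = D * L ^ Suc i" by simp
    finally show ?thesis using uh(2)[of "Suc i"] by (simp add: mult.commute)
  qed
  moreover have "(\<lambda>i. 2 * D * L ^ Suc i) \<longlonglongrightarrow> 2 * D * 0"
    using L by (intro tendsto_intros LIMSEQ_power_zero[THEN LIMSEQ_Suc]) simp
  ultimately have "ctrl_dist T NU (MSA uh) uh \<le> 0"
    by (intro LIMSEQ_le_const[of "\<lambda>i. 2 * D * L ^ Suc i"]) auto
  then show ?thesis using that uh(1) ctrl_dist_le_0_imp_eq[OF MSA_maps[OF uh(1)] uh(1)] by blast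
qed


lemma ex1_fixed_point:
  assumes "0 \<in> U"
  shows "\<exists>!uh. uh \<in> controls T U \<and> MSA uh = uh"
proof -
  have "(\<lambda>_. 0) \<in> controls T U" unfolding controls_def using assms by auto
  then obtain uh where uh: "uh \<in> controls T U" "MSA uh = uh" by (rule fixed_point_exists)
  show ?thesis
  proof (rule ex1I[of _ uh])
    fix w assume w: "w \<in> controls T U \<and> MSA w = w"
    then have "ctrl_dist T NU w uh \<le> L * ctrl_dist T NU w uh" using contraction[of w uh] uh by simp
    then have "ctrl_dist T NU w uh \<le> 0" using L by (simp add: mult_le_cancel_right1)
    then show "w = uh" using ctrl_dist_le_0_imp_eq w uh by blast
  qed (use uh in simp)
qed

lemma ctrl_dist_iterates_fixed_point_le:
  assumes uh: "uh \<in> controls T U" "MSA uh = uh" and u0: "u0 \<in> controls T U"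
  shows "ctrl_dist T NU ((MSA ^^ i) u0) uh \<le> L ^ i / (1 - L) * ctrl_dist T NU (MSA u0) u0"
proof -
  have "(MSA ^^ i) uh = uh" by (induction i) (use uh in auto)
  then have "ctrl_dist T NU ((MSA ^^ i) u0) uh \<le> L ^ i * ctrl_dist T NU u0 uh"
    using ctrl_dist_funpow_le[OF u0 uh(1), of i] by simp
  also have "ctrl_dist T NU u0 uh \<le> ctrl_dist T NU (MSA u0) u0 / (1 - L)"
  proof -
    have "ctrl_dist T NU u0 uh \<le> ctrl_dist T NU u0 (MSA u0) + ctrl_dist T NU (MSA u0) uh"
      by (rule ctrl_dist_triangle[OF u0 MSA_maps[OF u0] uh(1)])
    also have "ctrl_dist T NU (MSA u0) uh \<le> L * ctrl_dist T NU u0 uh"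
      using contraction[OF u0 uh(1)] uh(2) by simp
    finally have "(1 - L) * ctrl_dist T NU u0 uh \<le> ctrl_dist T NU (MSA u0) u0"
      using ctrl_dist_commute by (simp add: algebra_simps)
    then show ?thesis using L by (simp add: field_simps)
  qed
  finally show ?thesis using L by (simp add: mult_left_mono)
qed

lemma contraction_fixed_point:
  assumes "0 \<in> U"
  shows "(\<exists>!uh. uh \<in> controls T U \<and> MSA uh = uh)
       \<and> (\<forall>uh u0. uh \<in> controls T U \<and> MSA uh = uh \<and> u0 \<in> controls T U \<longrightarrow>
             ((\<lambda>i. ctrl_dist T NU ((MSA ^^ i) u0) uh) \<longlonglongrightarrow> 0)
           \<and> (\<forall>i t. t \<in> {0..T} \<longrightarrow>
                NU ((MSA ^^ i) u0 t - uh t) \<le> L ^ i / (1 - L) * ctrl_dist T NU (MSA u0) u0))"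
proof (intro conjI allI impI ex1_fixed_point[OF assms])
  fix uh u0 assume "uh \<in> controls T U \<and> MSA uh = uh \<and> u0 \<in> controls T U"
  then have uh: "uh \<in> controls T U" "MSA uh = uh" and u0: "u0 \<in> controls T U" by auto
  note bound = ctrl_dist_iterates_fixed_point_le[OF uh u0]
  show "(\<lambda>i. ctrl_dist T NU ((MSA ^^ i) u0) uh) \<longlonglongrightarrow> 0"
  proof (rule Lim_null_comparison)
    show "\<forall>\<^sub>F i in sequentially. norm (ctrl_dist T NU ((MSA ^^ i) u0) uh) \<le> L ^ i / (1 - L) * ctrl_dist T NU (MSA u0) u0"
      using bound ctrl_dist_nonneg[OF funpow_in_controls[OF u0] uh(1)] by (intro always_eventually allI) simp
    show "(\<lambda>i. L ^ i / (1 - L) * ctrl_dist T NU (MSA u0) u0) \<longlonglongrightarrow> 0"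
      using L by (intro tendsto_mult_left_zero tendsto_divide_zero LIMSEQ_power_zero) simp
  qed
  fix i t assume "t \<in> {0..T}"
  then show "NU ((MSA ^^ i) u0 t - uh t) \<le> L ^ i / (1 - L) * ctrl_dist T NU (MSA u0) u0"
    using pointwise_le_ctrl_dist[OF funpow_in_controls[OF u0] uh(1)] bound by (meson order_trans)
qed

end

locale msa_problem = control_space T U NU
  for T :: real and U :: "(real^'k) set" and NU :: "real^'k \<Rightarrow> real" +
  fixes c :: real
    and f :: "real \<Rightarrow> real^'n \<Rightarrow> real^'k \<Rightarrow> real^'n"
    and Dfx :: "real \<Rightarrow> real^'n \<Rightarrow> real^'k \<Rightarrow> real^'n^'n"
    and x0 :: "real^'n"
    and \<phi>x :: "real \<Rightarrow> real^'n \<Rightarrow> real^'k \<Rightarrow> real^'n"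
    and \<psi>x :: "real^'n \<Rightarrow> real^'n"
    and xs lam :: "(real \<Rightarrow> real^'k) \<Rightarrow> real \<Rightarrow> real^'n"
    and h :: "real \<Rightarrow> real^'n \<Rightarrow> real^'n \<Rightarrow> real^'k"
    and MSA :: "(real \<Rightarrow> real^'k) \<Rightarrow> real \<Rightarrow> real^'k"
    and X \<Lambda> :: "(real^'n) set"
    and N :: "real^'n \<Rightarrow> real"
    and l_fu l_fxx l_fxu l_phixx l_phixu l_psixx l_hx l_hl :: real
  assumes f_dx: "\<And>t x v. t \<in> {0..T} \<Longrightarrow> v \<in> U \<Longrightarrow>
      ((\<lambda>y. f t y v) has_derivative (\<lambda>y. Dfx t x v *v y)) (at x)"
    and Dfx_cont: "\<And>t v. t \<in> {0..T} \<Longrightarrow> v \<in> U \<Longrightarrow> continuous_on UNIV (\<lambda>x. Dfx t x v)"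
    and state: "\<And>u t. u \<in> controls T U \<Longrightarrow> t \<in> {0..T} \<Longrightarrow>
      ((\<lambda>s. f s (xs u s) (u s)) has_integral (xs u t - x0)) {0..t}"
    and costate: "\<And>u t. u \<in> controls T U \<Longrightarrow> t \<in> {0..T} \<Longrightarrow>
      ((\<lambda>s. transpose (Dfx s (xs u s) (u s)) *v lam u s + \<phi>x s (xs u s) (u s))
         has_integral (lam u t - \<psi>x (xs u T))) {t..T}"
    and xs_X: "\<And>u t. u \<in> controls T U \<Longrightarrow> t \<in> {0..T} \<Longrightarrow> xs u t \<in> X"
    and lam_Lam: "\<And>u t. u \<in> controls T U \<Longrightarrow> t \<in> {0..T} \<Longrightarrow> lam u t \<in> \<Lambda>"
    and N_norm: "is_norm N"
    and c_pos: "c > 0"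
    and A1: "\<And>t v x. t \<in> {0..T} \<Longrightarrow> v \<in> U \<Longrightarrow> log_norm N (Dfx t x v) \<le> - c"
    and A2: "\<And>t x. t \<in> {0..T} \<Longrightarrow> lip_with NU N U (\<lambda>v. f t x v) l_fu"
    and A3x: "\<And>t v l. t \<in> {0..T} \<Longrightarrow> v \<in> U \<Longrightarrow> l \<in> \<Lambda> \<Longrightarrow>
      lip_with N (dual_norm N) UNIV (\<lambda>x. transpose (Dfx t x v) *v l) l_fxx"
    and A3u: "\<And>t x l. t \<in> {0..T} \<Longrightarrow> x \<in> X \<Longrightarrow> l \<in> \<Lambda> \<Longrightarrow>
      lip_with NU (dual_norm N) U (\<lambda>v. transpose (Dfx t x v) *v l) l_fxu"
    and A4x: "\<And>t v. t \<in> {0..T} \<Longrightarrow> v \<in> U \<Longrightarrow> lip_with N (dual_norm N) UNIV (\<lambda>x. \<phi>x t x v) l_phixx"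
    and A4u: "\<And>t x. t \<in> {0..T} \<Longrightarrow> x \<in> X \<Longrightarrow> lip_with NU (dual_norm N) U (\<lambda>v. \<phi>x t x v) l_phixu"
    and A4psi: "lip_with N (dual_norm N) UNIV \<psi>x l_psixx"
    and A5x: "\<And>t l. t \<in> {0..T} \<Longrightarrow> l \<in> \<Lambda> \<Longrightarrow> lip_with N NU X (\<lambda>x. h t x l) l_hx"
    and A5l: "\<And>t x. t \<in> {0..T} \<Longrightarrow> x \<in> X \<Longrightarrow> lip_with (dual_norm N) NU \<Lambda> (\<lambda>l. h t x l) l_hl"
    and MSA_h: "\<And>u t. u \<in> controls T U \<Longrightarrow> t \<in> {0..T} \<Longrightarrow> MSA u t = h t (xs u t) (lam u t)"
    and consts_nonneg: "l_fu \<ge> 0" "l_fxx \<ge> 0" "l_fxu \<ge> 0" "l_phixx \<ge> 0" "l_phixu \<ge> 0"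
      "l_psixx \<ge> 0" "l_hx \<ge> 0" "l_hl \<ge> 0"
begin

definition kappa :: real where
  "kappa = (1 - exp (- c * T)) / c"

definition costate_rhs :: "(real \<Rightarrow> real^'k) \<Rightarrow> real \<Rightarrow> real^'n" where
  "costate_rhs u s = transpose (Dfx s (xs u s) (u s)) *v lam u s + \<phi>x s (xs u s) (u s)"

lemma exp_decay_le_kappa: "r \<le> T \<Longrightarrow> (1 - exp (- c * r)) / c \<le> kappa"
  unfolding kappa_def using c_pos by (simp add: divide_right_mono)

lemma kappa_nonneg: "kappa \<ge> 0"
  unfolding kappa_def using c_pos T_nonneg by simp

lemma xs_initial: "u \<in> controls T U \<Longrightarrow> xs u 0 = x0"
  using state[of u 0] T_nonneg has_integral_unique[OF _ has_integral_refl(1)] by fastforce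

lemma lam_terminal: "u \<in> controls T U \<Longrightarrow> lam u T = \<psi>x (xs u T)"
  using costate[of u T] T_nonneg has_integral_unique[OF _ has_integral_refl(1)] by fastforce

lemma state_dini:
  assumes u: "u \<in> controls T U" and v: "v \<in> controls T U" and s: "s \<in> {0..T}"
  shows "right_dini_le N (xs u s - xs v s) (f s (xs u s) (u s) - f s (xs v s) (v s))
    (- c * N (xs u s - xs v s) + l_fu * ctrl_dist T NU u v)"
proof -
  have "right_dini_le N (xs u s - xs v s) (f s (xs u s) (u s) - f s (xs v s) (u s))
      (- c * N (xs u s - xs v s))"
    using f_dx[OF s] Dfx_cont[OF s] A1[OF s] control_in_U[OF u s]
    by (intro right_dini_le_one_sided[OF N_norm, where g="\<lambda>y. f s y (u s)" and A="\<lambda>z. Dfx s z (u s)"])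
      auto
  moreover have "N (f s (xs v s) (u s) - f s (xs v s) (v s)) \<le> l_fu * ctrl_dist T NU u v"
  proof -
    have "N (f s (xs v s) (u s) - f s (xs v s) (v s)) \<le> l_fu * NU (u s - v s)"
      using A2[OF s, of "xs v s"] control_in_U[OF u s] control_in_U[OF v s] unfolding lip_with_def by blast
    also have "\<dots> \<le> l_fu * ctrl_dist T NU u v"
      using pointwise_le_ctrl_dist[OF u v s] consts_nonneg by (intro mult_left_mono) auto
    finally show ?thesis .
  qed
  ultimately show ?thesis using right_dini_le_add[OF N_norm] by (fastforce simp: algebra_simps)
qed

lemma state_lipschitz:
  assumes u: "u \<in> controls T U" and v: "v \<in> controls T U" and t: "t \<in> {0..T}"
  shows "N (xs u t - xs v t) \<le> l_fu * kappa * ctrl_dist T NU u v"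
proof -
  define d where "d = ctrl_dist T NU u v"
  have K: "l_fu * d \<ge> 0" unfolding d_def using ctrl_dist_nonneg[OF u v] consts_nonneg by simp
  have "N (xs u t - xs v t) \<le> exp (- c * (t - 0)) * N (xs u 0 - xs v 0) + l_fu * d * (1 - exp (- c * (t - 0))) / c"
  proof (rule dissipative_gronwall[OF N_norm _ c_pos K, where F="\<lambda>s. f s (xs u s) (u s) - f s (xs v s) (v s)"])
    fix s s' assume "0 \<le> s" "s \<le> s'" "s' \<le> t"
    then have "((\<lambda>s. f s (xs u s) (u s)) has_integral (xs u s' - xs u s)) {s..s'}"
      "((\<lambda>s. f s (xs v s) (v s)) has_integral (xs v s' - xs v s)) {s..s'}"
      using t by (auto intro!: has_integral_increment[where b=T] state u v)
    from has_integral_diff[OF this]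
    show "((\<lambda>s. f s (xs u s) (u s) - f s (xs v s) (v s)) has_integral (xs u s' - xs v s' - (xs u s - xs v s))) {s..s'}"
      by (simp add: algebra_simps)
  qed (use t state_dini[OF u v] in \<open>auto simp: d_def\<close>)
  also have "\<dots> = l_fu * d * ((1 - exp (- c * t)) / c)"
    using xs_initial[OF u] xs_initial[OF v] is_norm_zero[OF N_norm] by simp
  also have "\<dots> \<le> l_fu * d * kappa"
    using exp_decay_le_kappa[of t] t K by (intro mult_left_mono) auto
  finally show ?thesis unfolding d_def by (simp add: algebra_simps)
qed


lemma costate_rhs_linearization_error:
  assumes u: "u \<in> controls T U" and v: "v \<in> controls T U" and s: "s \<in> {0..T}"
  shows "dual_norm N (costate_rhs u s - costate_rhs v s - transpose (Dfx s (xs u s) (u s)) *v (lam u s - lam v s))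
    \<le> ((l_fxx + l_phixx) * l_fu * kappa + (l_fxu + l_phixu)) * ctrl_dist T NU u v"
proof -
  define d where "d = ctrl_dist T NU u v"
  have us: "u s \<in> U" "v s \<in> U" using control_in_U u v s by auto
  have x: "N (xs u s - xs v s) \<le> l_fu * kappa * d" unfolding d_def by (rule state_lipschitz[OF u v s])
  have w: "NU (u s - v s) \<le> d" unfolding d_def by (rule pointwise_le_ctrl_dist[OF u v s])
  define P1 where "P1 = transpose (Dfx s (xs u s) (u s)) *v lam v s - transpose (Dfx s (xs v s) (u s)) *v lam v s"
  define P2 where "P2 = transpose (Dfx s (xs v s) (u s)) *v lam v s - transpose (Dfx s (xs v s) (v s)) *v lam v s"
  define P3 where "P3 = \<phi>x s (xs u s) (u s) - \<phi>x s (xs v s) (u s)"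
  define P4 where "P4 = \<phi>x s (xs v s) (u s) - \<phi>x s (xs v s) (v s)"
  have eq: "costate_rhs u s - costate_rhs v s - transpose (Dfx s (xs u s) (u s)) *v (lam u s - lam v s)
      = P1 + P2 + P3 + P4"
    unfolding costate_rhs_def P1_def P2_def P3_def P4_def
    by (simp add: matrix_vector_mult_diff_distrib algebra_simps)
  have "dual_norm N (P1 + P2 + P3 + P4) \<le> dual_norm N P1 + dual_norm N P2 + dual_norm N P3 + dual_norm N P4"
    using dual_norm_triangle[OF N_norm, of "P1 + P2 + P3" P4] dual_norm_triangle[OF N_norm, of "P1 + P2" P3]
      dual_norm_triangle[OF N_norm, of P1 P2] by linarith
  moreover have "dual_norm N P1 \<le> l_fxx * N (xs u s - xs v s)" "dual_norm N P3 \<le> l_phixx * N (xs u s - xs v s)"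
    using A3x[OF s us(1) lam_Lam[OF v s]] A4x[OF s us(1)] unfolding lip_with_def P1_def P3_def by blast+
  moreover have "dual_norm N P2 \<le> l_fxu * NU (u s - v s)" "dual_norm N P4 \<le> l_phixu * NU (u s - v s)"
    using A3u[OF s xs_X[OF v s] lam_Lam[OF v s]] A4u[OF s xs_X[OF v s]] us
    unfolding lip_with_def P2_def P4_def by blast+
  moreover have "l_fxx * N (xs u s - xs v s) \<le> l_fxx * (l_fu * kappa * d)"
    "l_phixx * N (xs u s - xs v s) \<le> l_phixx * (l_fu * kappa * d)"
    "l_fxu * NU (u s - v s) \<le> l_fxu * d" "l_phixu * NU (u s - v s) \<le> l_phixu * d"
    using x w consts_nonneg by (auto intro: mult_left_mono)
  ultimately have "dual_norm N (P1 + P2 + P3 + P4)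
      \<le> l_fxx * (l_fu * kappa * d) + l_phixx * (l_fu * kappa * d) + l_fxu * d + l_phixu * d"
    by linarith
  also have "\<dots> = ((l_fxx + l_phixx) * l_fu * kappa + (l_fxu + l_phixu)) * d" by (simp add: algebra_simps)
  finally show ?thesis unfolding eq d_def .
qed

lemma costate_dini:
  assumes u: "u \<in> controls T U" and v: "v \<in> controls T U" and s: "s \<in> {0..T}"
  shows "right_dini_le (dual_norm N) (lam u s - lam v s) (costate_rhs u s - costate_rhs v s)
    (- c * dual_norm N (lam u s - lam v s)
      + ((l_fxx + l_phixx) * l_fu * kappa + (l_fxu + l_phixu)) * ctrl_dist T NU u v)"
proof -
  have "right_dini_le (dual_norm N) (lam u s - lam v s)
      (transpose (Dfx s (xs u s) (u s)) *v (lam u s - lam v s)) (- c * dual_norm N (lam u s - lam v s))"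
    by (rule right_dini_le_transpose[OF N_norm A1[OF s control_in_U[OF u s]]])
  from right_dini_le_add[OF is_norm_dual_norm[OF N_norm] this costate_rhs_linearization_error[OF u v s]]
  show ?thesis by (simp add: algebra_simps)
qed

lemma costate_lipschitz:
  assumes u: "u \<in> controls T U" and v: "v \<in> controls T U" and t: "t \<in> {0..T}"
  shows "dual_norm N (lam u t - lam v t)
    \<le> (l_psixx * l_fu * kappa + ((l_fxx + l_phixx) * l_fu * kappa + (l_fxu + l_phixu)) * kappa)
        * ctrl_dist T NU u v"
proof -
  define d where "d = ctrl_dist T NU u v"
  define K where "K = ((l_fxx + l_phixx) * l_fu * kappa + (l_fxu + l_phixu)) * d"
  have K: "K \<ge> 0" unfolding K_def d_def using ctrl_dist_nonneg[OF u v] consts_nonneg kappa_nonneg by simp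
  have "dual_norm N (lam u t - lam v t)
      \<le> exp (- c * (T - t)) * dual_norm N (lam u T - lam v T) + K * (1 - exp (- c * (T - t))) / c"
  proof (rule dissipative_gronwall_backward[OF is_norm_dual_norm[OF N_norm] _ c_pos K,
        where F="\<lambda>s. costate_rhs u s - costate_rhs v s"])
    fix s s' assume "t \<le> s" "s \<le> s'" "s' \<le> T"
    then have "(costate_rhs w has_integral (lam w s - lam w s')) {s..s'}" if "w \<in> controls T U" for w
      using t costate[OF that] unfolding costate_rhs_def
      by (intro has_integral_increment_backward[where a=0 and b=T and z="\<psi>x (xs w T)"]) auto
    then have "(costate_rhs u has_integral (lam u s - lam u s')) {s..s'}"
      "(costate_rhs v has_integral (lam v s - lam v s')) {s..s'}"
      using u v by blast+
    from has_integral_diff[OF this]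
    show "((\<lambda>s. costate_rhs u s - costate_rhs v s) has_integral (lam u s - lam v s - (lam u s' - lam v s'))) {s..s'}"
      by (simp add: algebra_simps)
  qed (use t costate_dini[OF u v] in \<open>auto simp: K_def d_def\<close>)
  also have "dual_norm N (lam u T - lam v T) \<le> l_psixx * (l_fu * kappa * d)"
  proof -
    have "dual_norm N (lam u T - lam v T) \<le> l_psixx * N (xs u T - xs v T)"
      using A4psi unfolding lip_with_def lam_terminal[OF u] lam_terminal[OF v] by blast
    also have "\<dots> \<le> l_psixx * (l_fu * kappa * d)"
      using state_lipschitz[OF u v, of T] T_nonneg consts_nonneg unfolding d_def
      by (intro mult_left_mono) auto
    finally show ?thesis .
  qed
  also have "exp (- c * (T - t)) * (l_psixx * (l_fu * kappa * d)) \<le> 1 * (l_psixx * (l_fu * kappa * d))"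
    using t c_pos consts_nonneg kappa_nonneg ctrl_dist_nonneg[OF u v] unfolding d_def
    by (intro mult_right_mono) auto
  also have "K * (1 - exp (- c * (T - t))) / c = K * ((1 - exp (- c * (T - t))) / c)" by simp
  also have "\<dots> \<le> K * kappa"
    using exp_decay_le_kappa[of "T - t"] t K by (intro mult_left_mono) auto
  finally show ?thesis unfolding K_def d_def by (simp add: algebra_simps)
qed

lemma msa_lipschitz:
  assumes u: "u \<in> controls T U" and v: "v \<in> controls T U"
  shows "ctrl_dist T NU (MSA u) (MSA v)
    \<le> ((l_hx * l_fu + l_hl * (l_psixx * l_fu + l_phixu + l_fxu)) * kappa
        + l_hl * l_fu * (l_phixx + l_fxx) * kappa\<^sup>2) * ctrl_dist T NU u v"
proof (rule ctrl_dist_leI)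
  fix t assume t: "t \<in> {0..T}"
  have eq: "MSA u t - MSA v t = (h t (xs u t) (lam u t) - h t (xs v t) (lam u t))
      + (h t (xs v t) (lam u t) - h t (xs v t) (lam v t))"
    using MSA_h[OF u t] MSA_h[OF v t] by simp
  have "NU (MSA u t - MSA v t) \<le> NU (h t (xs u t) (lam u t) - h t (xs v t) (lam u t))
      + NU (h t (xs v t) (lam u t) - h t (xs v t) (lam v t))"
    unfolding eq by (rule is_normD(1)[OF NU_norm])
  also have "\<dots> \<le> l_hx * N (xs u t - xs v t) + l_hl * dual_norm N (lam u t - lam v t)"
  proof (rule add_mono)
    show "NU (h t (xs u t) (lam u t) - h t (xs v t) (lam u t)) \<le> l_hx * N (xs u t - xs v t)"
      using A5x[OF t lam_Lam[OF u t]] xs_X[OF u t] xs_X[OF v t] unfolding lip_with_def by blast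
    show "NU (h t (xs v t) (lam u t) - h t (xs v t) (lam v t)) \<le> l_hl * dual_norm N (lam u t - lam v t)"
      using A5l[OF t xs_X[OF v t]] lam_Lam[OF u t] lam_Lam[OF v t] unfolding lip_with_def by blast
  qed
  also have "\<dots> \<le> l_hx * (l_fu * kappa * ctrl_dist T NU u v)
      + l_hl * ((l_psixx * l_fu * kappa + ((l_fxx + l_phixx) * l_fu * kappa + (l_fxu + l_phixu)) * kappa)
        * ctrl_dist T NU u v)"
    using state_lipschitz[OF u v t] costate_lipschitz[OF u v t] consts_nonneg
    by (intro add_mono mult_left_mono) auto
  finally show "NU (MSA u t - MSA v t) \<le> ((l_hx * l_fu + l_hl * (l_psixx * l_fu + l_phixu + l_fxu)) * kappa
      + l_hl * l_fu * (l_phixx + l_fxx) * kappa\<^sup>2) * ctrl_dist T NU u v"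
    by (simp add: algebra_simps power2_eq_square)
qed

end

theorem theorem5:
  fixes T c :: real
    and U :: "(real^'k) set"
    and f :: "real \<Rightarrow> real^'n \<Rightarrow> real^'k \<Rightarrow> real^'n"
    and Dfx :: "real \<Rightarrow> real^'n \<Rightarrow> real^'k \<Rightarrow> real^'n^'n"
    and Dfu :: "real \<Rightarrow> real^'n \<Rightarrow> real^'k \<Rightarrow> real^'k^'n"
    and x0 :: "real^'n"
    and \<phi> :: "real \<Rightarrow> real^'n \<Rightarrow> real^'k \<Rightarrow> real"
    and \<phi>x :: "real \<Rightarrow> real^'n \<Rightarrow> real^'k \<Rightarrow> real^'n"
    and \<psi> :: "real^'n \<Rightarrow> real"
    and \<psi>x :: "real^'n \<Rightarrow> real^'n"
    and xs :: "(real \<Rightarrow> real^'k) \<Rightarrow> real \<Rightarrow> real^'n"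
    and lam :: "(real \<Rightarrow> real^'k) \<Rightarrow> real \<Rightarrow> real^'n"
    and h :: "real \<Rightarrow> real^'n \<Rightarrow> real^'n \<Rightarrow> real^'k"
    and MSA :: "(real \<Rightarrow> real^'k) \<Rightarrow> (real \<Rightarrow> real^'k)"
    and X \<Lambda> :: "(real^'n) set"
    and N :: "real^'n \<Rightarrow> real"
    and NU :: "real^'k \<Rightarrow> real"
    and l_fu l_fxx l_fxu l_phixx l_phixu l_psixx l_hx l_hl :: real
  assumes T_pos: "T > 0"
    and U_compact: "compact U" and U_zero: "0 \<in> U"
    and f_cont: "continuous_on ({0..T} \<times> UNIV \<times> U) (\<lambda>(t, x, v). f t x v)"
    and f_dx: "\<And>t x v. t \<in> {0..T} \<Longrightarrow> v \<in> U \<Longrightarrow>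
                 ((\<lambda>y. f t y v) has_derivative (\<lambda>y. Dfx t x v *v y)) (at x)"
    and Dfx_cont: "\<And>t v. t \<in> {0..T} \<Longrightarrow> v \<in> U \<Longrightarrow> continuous_on UNIV (\<lambda>x. Dfx t x v)"
    and f_du: "\<And>t x v. t \<in> {0..T} \<Longrightarrow> v \<in> U \<Longrightarrow>
                 ((\<lambda>w. f t x w) has_derivative (\<lambda>w. Dfu t x v *v w)) (at v within U)"
    and Dfu_cont: "\<And>t x. t \<in> {0..T} \<Longrightarrow> continuous_on U (\<lambda>v. Dfu t x v)"
    and phi_dx: "\<And>t x v. t \<in> {0..T} \<Longrightarrow> v \<in> U \<Longrightarrow>
                 ((\<lambda>y. \<phi> t y v) has_derivative (\<lambda>y. \<phi>x t x v \<bullet> y)) (at x)"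
    and psi_dx: "\<And>x. (\<psi> has_derivative (\<lambda>y. \<psi>x x \<bullet> y)) (at x)"
    \<comment> \<open>state: x_u(t) = x0 + int_0^t f(s, x_u(s), u(s)) ds\<close>
    and state: "\<And>u t. u \<in> controls T U \<Longrightarrow> t \<in> {0..T} \<Longrightarrow>
                 ((\<lambda>s. f s (xs u s) (u s)) has_integral (xs u t - x0)) {0..t}"
    \<comment> \<open>costate: lam_u(t) = psi_x(x_u(T)) + int_t^T (D_xf^T lam_u + phi_x) ds\<close>
    and costate: "\<And>u t. u \<in> controls T U \<Longrightarrow> t \<in> {0..T} \<Longrightarrow>
                 ((\<lambda>s. transpose (Dfx s (xs u s) (u s)) *v lam u s + \<phi>x s (xs u s) (u s))
                    has_integral (lam u t - \<psi>x (xs u T))) {t..T}"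
    and X_bdd: "bounded X" and Lam_bdd: "bounded \<Lambda>"
    and xs_X: "\<And>u t. u \<in> controls T U \<Longrightarrow> t \<in> {0..T} \<Longrightarrow> xs u t \<in> X"
    and lam_Lam: "\<And>u t. u \<in> controls T U \<Longrightarrow> t \<in> {0..T} \<Longrightarrow> lam u t \<in> \<Lambda>"
    and N_norm: "is_norm N" and NU_norm: "is_norm NU"
    \<comment> \<open>(A1)\<close>
    and c_pos: "c > 0"
    and A1: "\<And>t v x. t \<in> {0..T} \<Longrightarrow> v \<in> U \<Longrightarrow> log_norm N (Dfx t x v) \<le> - c"
    and A1_bdd: "bounded (xs (\<lambda>_. 0) ` {0..T})"
    \<comment> \<open>(A2)\<close>
    and A2: "\<And>t x. t \<in> {0..T} \<Longrightarrow> lip_with NU N U (\<lambda>v. f t x v) l_fu"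
    \<comment> \<open>(A3)\<close>
    and A3x: "\<And>t v l. t \<in> {0..T} \<Longrightarrow> v \<in> U \<Longrightarrow> l \<in> \<Lambda> \<Longrightarrow>
                lip_with N (dual_norm N) UNIV (\<lambda>x. transpose (Dfx t x v) *v l) l_fxx"
    and A3u: "\<And>t x l. t \<in> {0..T} \<Longrightarrow> x \<in> X \<Longrightarrow> l \<in> \<Lambda> \<Longrightarrow>
                lip_with NU (dual_norm N) U (\<lambda>v. transpose (Dfx t x v) *v l) l_fxu"
    \<comment> \<open>(A4)\<close>
    and A4x: "\<And>t v. t \<in> {0..T} \<Longrightarrow> v \<in> U \<Longrightarrow> lip_with N (dual_norm N) UNIV (\<lambda>x. \<phi>x t x v) l_phixx"
    and A4u: "\<And>t x. t \<in> {0..T} \<Longrightarrow> x \<in> X \<Longrightarrow> lip_with NU (dual_norm N) U (\<lambda>v. \<phi>x t x v) l_phixu"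
    and A4psi: "lip_with N (dual_norm N) UNIV \<psi>x l_psixx"
    \<comment> \<open>(A5)\<close>
    and h_U: "\<And>t x l. t \<in> {0..T} \<Longrightarrow> x \<in> X \<Longrightarrow> l \<in> \<Lambda> \<Longrightarrow> h t x l \<in> U"
    and h_argmin: "\<And>t x l v. t \<in> {0..T} \<Longrightarrow> x \<in> X \<Longrightarrow> l \<in> \<Lambda> \<Longrightarrow> v \<in> U \<Longrightarrow>
                hamiltonian f \<phi> t x l (h t x l) \<le> hamiltonian f \<phi> t x l v"
    and A5x: "\<And>t l. t \<in> {0..T} \<Longrightarrow> l \<in> \<Lambda> \<Longrightarrow> lip_with N NU X (\<lambda>x. h t x l) l_hx"
    and A5l: "\<And>t x. t \<in> {0..T} \<Longrightarrow> x \<in> X \<Longrightarrow> lip_with (dual_norm N) NU \<Lambda> (\<lambda>l. h t x l) l_hl"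
    \<comment> \<open>MSA operator on controls\<close>
    and MSA_maps: "\<And>u. u \<in> controls T U \<Longrightarrow> MSA u \<in> controls T U"
    and MSA_h: "\<And>u t. u \<in> controls T U \<Longrightarrow> t \<in> {0..T} \<Longrightarrow> MSA u t = h t (xs u t) (lam u t)"
    and consts_nonneg: "l_fu \<ge> 0" "l_fxx \<ge> 0" "l_fxu \<ge> 0" "l_phixx \<ge> 0" "l_phixu \<ge> 0"
        "l_psixx \<ge> 0" "l_hx \<ge> 0" "l_hl \<ge> 0"
  shows "let \<kappa> = (1 - exp (- c * T)) / c;
             b1 = l_hx * l_fu + l_hl * (l_psixx * l_fu + l_phixu + l_fxu);
             b2 = l_hl * l_fu * (l_phixx + l_fxx);
             L = b1 * \<kappa> + b2 * \<kappa>^2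
         in (\<forall>u\<in>controls T U. \<forall>v\<in>controls T U.
                 ctrl_dist T NU (MSA u) (MSA v) \<le> L * ctrl_dist T NU u v)
            \<and> (L < 1 \<longrightarrow>
                 (\<exists>!uh. uh \<in> controls T U \<and> MSA uh = uh)
               \<and> (\<forall>uh u0. uh \<in> controls T U \<and> MSA uh = uh \<and> u0 \<in> controls T U \<longrightarrow>
                     ((\<lambda>i. ctrl_dist T NU ((MSA ^^ i) u0) uh) \<longlonglongrightarrow> 0)
                   \<and> (\<forall>i t. t \<in> {0..T} \<longrightarrow>
                        NU ((MSA ^^ i) u0 t - uh t)
                          \<le> L ^ i / (1 - L) * ctrl_dist T NU (MSA u0) u0)))"
proof -
  interpret msa_problem T U NU c f Dfx x0 \<phi>x \<psi>x xs lam h MSA X \<Lambda> N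
      l_fu l_fxx l_fxu l_phixx l_phixu l_psixx l_hx l_hl
    using assms by unfold_locales auto
  define L where "L = (l_hx * l_fu + l_hl * (l_psixx * l_fu + l_phixu + l_fxu)) * kappa
    + l_hl * l_fu * (l_phixx + l_fxx) * kappa\<^sup>2"
  have lip: "ctrl_dist T NU (MSA u) (MSA v) \<le> L * ctrl_dist T NU u v"
    if "u \<in> controls T U" "v \<in> controls T U" for u v
    using msa_lipschitz[OF that] unfolding L_def .
  have "L \<ge> 0" unfolding L_def using consts_nonneg kappa_nonneg by simp
  then have "contraction_on_controls T U NU MSA L" if "L < 1"
    using that MSA_maps lip by unfold_locales auto
  then show ?thesis
    unfolding Let_def kappa_def[symmetric] L_def[symmetric]
    using lip contraction_on_controls.contraction_fixed_point[OF _ U_zero] by blast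
qed

end
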